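(* For every $q\geqslant 1$ there exist $\tilde{p}<1$ and $\kappa>1$ such that for every $p\geqslant\tilde{p}$, every $c\geqslant 1$ and every box $\Lambda$ with $|\Lambda|>3^{6d}$, $$\Phi^{TB}_{\Lambda,p,q}\Big(\exists C\in\mathcal{C},\ \exists e\in C,\ d\big(e,\mathcal{P}\cup\Lambda^c\setminus\{e\}\big)\geqslant\kappa c\ln|\Lambda|\ \Big|\ T\nleftrightarrow B\Big)\leqslant\frac{1}{|\Lambda|^c}.$$
   Context: Let $d\geqslant 2$ and $\mathbb{L}^d=(\mathbb{Z}^d,\mathbb{E}^d)$ the nearest-neighbour lattice. The box $\Lambda=(V,E)$ is the subgraph of $\mathbb{L}^d$ induced by the vertices in a $d$-dimensional cube centred at the origin (not necessarily axis-parallel); $|\Lambda|$ is its cardinality (number of edges), $\Lambda^c$ its complement, $d(\cdot,\cdot)$ the lattice distance between edges/sets of edges. $\partial\Lambda=\{x\in V:\exists y\notin V,\ \langle x,y\rangle\in\mathbb{E}^d\}$. A hyperplane through the origin parallel to a face of the cube splits $\Lambda$ into $\Lambda^+,\Lambda^-$; $T=\partial\Lambda\cap\Lambda^+$, $B=\partial\Lambda\cap\Lambda^-$. For $\omega\in\{0,1\}^E$ (edges with $\omega(e)=1$ open, others closed), $\Phi^{TB}_{\Lambda,p,q}(\omega)\propto\prod_{e\in E}p^{\omega(e)}(1-p)^{1-\omega(e)}q^{k^{TB}(\omega)}$, where $k^{TB}(\omega)$ is the number of connected components (isolated vertices included) of the graph obtained from $(V,\{\text{open edges}\})$ by adding two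 extra vertices, one joined to every vertex of $T$ and the other to every vertex of $B$. $\{T\nleftrightarrow B\}$: no open path in $\Lambda$ joins $T$ to $B$. A set $S$ of edges separates $T$ and $B$ if no connected subgraph of $(V,E\setminus S)$ meets both $T$ and $B$; a cut is such a separating set which is minimal for inclusion. $\mathcal{C}$ denotes the set of cuts of the configuration, i.e. cuts all of whose edges are closed. $\mathcal{P}$ is the set of pivotal edges: edges $e\in E$ whose opening would create an open path from $T$ to $B$. *)

theory Defs
  imports Complex_Main
begin

definition l1 :: "nat \<Rightarrow> int list \<Rightarrow> int list \<Rightarrow> int" where
  "l1 d x y = (\<Sum>i<d. \<bar>x ! i - y ! i\<bar>)"

definition lattice_pt :: "nat \<Rightarrow> int list \<Rightarrow> bool" where
  "lattice_pt d x \<longleftrightarrow> length x = d"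

definition lattice_adj :: "nat \<Rightarrow> int list \<Rightarrow> int list \<Rightarrow> bool" where
  "lattice_adj d x y \<longleftrightarrow> lattice_pt d x \<and> lattice_pt d y \<and> l1 d x y = 1"

definition lattice_edge :: "nat \<Rightarrow> int list set \<Rightarrow> bool" where
  "lattice_edge d e \<longleftrightarrow> (\<exists>x y. e = {x, y} \<and> lattice_adj d x y)"

text \<open>A cube centred at the origin: orthonormal frame u 0, ..., u (d-1) of R^d and
  half side-length r; the box vertices are the lattice points in the (closed) cube.\<close>

definition inner_pt :: "nat \<Rightarrow> (nat \<Rightarrow> real) \<Rightarrow> int list \<Rightarrow> real" where
  "inner_pt d v x = (\<Sum>k<d. v k * real_of_int (x ! k))"

definition orthonormal_frame :: "nat \<Rightarrow> (nat \<Rightarrow> nat \<Rightarrow> real) \<Rightarrow> bool" where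
  "orthonormal_frame d u \<longleftrightarrow>
     (\<forall>i<d. \<forall>j<d. (\<Sum>k<d. u i k * u j k) = (if i = j then 1 else 0))"

definition box_V :: "nat \<Rightarrow> (nat \<Rightarrow> nat \<Rightarrow> real) \<Rightarrow> real \<Rightarrow> int list set" where
  "box_V d u r = {x. lattice_pt d x \<and> (\<forall>i<d. \<bar>inner_pt d (u i) x\<bar> \<le> r)}"

definition box_E :: "nat \<Rightarrow> (nat \<Rightarrow> nat \<Rightarrow> real) \<Rightarrow> real \<Rightarrow> int list set set" where
  "box_E d u r = {e. lattice_edge d e \<and> e \<subseteq> box_V d u r}"

definition box_Ec :: "nat \<Rightarrow> (nat \<Rightarrow> nat \<Rightarrow> real) \<Rightarrow> real \<Rightarrow> int list set set" where
  "box_Ec d u r = {e. lattice_edge d e \<and> e \<notin> box_E d u r}"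

definition box_bd :: "nat \<Rightarrow> (nat \<Rightarrow> nat \<Rightarrow> real) \<Rightarrow> real \<Rightarrow> int list set" where
  "box_bd d u r = {x \<in> box_V d u r. \<exists>y. y \<notin> box_V d u r \<and> lattice_adj d x y}"

text \<open>Splitting by the hyperplane through 0 orthogonal to u j (parallel to a face).\<close>
definition box_T :: "nat \<Rightarrow> (nat \<Rightarrow> nat \<Rightarrow> real) \<Rightarrow> real \<Rightarrow> nat \<Rightarrow> int list set" where
  "box_T d u r j = {x \<in> box_bd d u r. inner_pt d (u j) x \<ge> 0}"

definition box_B :: "nat \<Rightarrow> (nat \<Rightarrow> nat \<Rightarrow> real) \<Rightarrow> real \<Rightarrow> nat \<Rightarrow> int list set" where
  "box_B d u r j = {x \<in> box_bd d u r. inner_pt d (u j) x < 0}"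

text \<open>Adjacency relation induced by a set of edges (configurations are given by
  their set of open edges).\<close>
definition adj_rel :: "'v set set \<Rightarrow> ('v \<times> 'v) set" where
  "adj_rel F = {(x, y). {x, y} \<in> F \<and> x \<noteq> y}"

definition connects :: "'v set set \<Rightarrow> 'v set \<Rightarrow> 'v set \<Rightarrow> bool" where
  "connects F T B \<longleftrightarrow> (\<exists>x\<in>T. \<exists>y\<in>B. (x, y) \<in> (adj_rel F)\<^sup>*)"

definition separates :: "'v set set \<Rightarrow> 'v set set \<Rightarrow> 'v set \<Rightarrow> 'v set \<Rightarrow> bool" where
  "separates E S T B \<longleftrightarrow> S \<subseteq> E \<and> \<not> connects (E - S) T B"

definition is_cut :: "'v set set \<Rightarrow> 'v set set \<Rightarrow> 'v set \<Rightarrow> 'v set \<Rightarrow> bool" where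
  "is_cut E S T B \<longleftrightarrow> separates E S T B \<and> (\<forall>S'. S' \<subset> S \<longrightarrow> \<not> separates E S' T B)"

definition cuts_of :: "'v set set \<Rightarrow> 'v set \<Rightarrow> 'v set \<Rightarrow> 'v set set \<Rightarrow> 'v set set set" where
  "cuts_of E T B \<omega> = {C. is_cut E C T B \<and> C \<inter> \<omega> = {}}"

definition pivotal :: "'v set set \<Rightarrow> 'v set \<Rightarrow> 'v set \<Rightarrow> 'v set set \<Rightarrow> 'v set set" where
  "pivotal E T B \<omega> = {e \<in> E. \<not> connects \<omega> T B \<and> connects (insert e \<omega>) T B}"

definition kTB :: "'v set \<Rightarrow> 'v set \<Rightarrow> 'v set \<Rightarrow> 'v set set \<Rightarrow> nat" where
  "kTB V T B \<omega> =
    (let V' = Inl ` V \<union> {Inr True, Inr False};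
         R = {(Inl x, Inl y) | x y. {x, y} \<in> \<omega>}
           \<union> {(Inr True, Inl x) | x. x \<in> T}
           \<union> {(Inr False, Inl x) | x. x \<in> B};
         Rel = (R \<union> R\<inverse>)\<^sup>* \<inter> (V' \<times> V')
     in card (V' // Rel))"

definition rc_weight :: "'v set \<Rightarrow> 'v set set \<Rightarrow> 'v set \<Rightarrow> 'v set \<Rightarrow> real \<Rightarrow> real
    \<Rightarrow> 'v set set \<Rightarrow> real" where
  "rc_weight V E T B p q \<omega> =
     p ^ card \<omega> * (1 - p) ^ (card E - card \<omega>) * q ^ kTB V T B \<omega>"

definition PhiTB :: "'v set \<Rightarrow> 'v set set \<Rightarrow> 'v set \<Rightarrow> 'v set \<Rightarrow> real \<Rightarrow> real
    \<Rightarrow> ('v set set \<Rightarrow> bool) \<Rightarrow> real" where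
  "PhiTB V E T B p q A =
     (\<Sum>\<omega>\<in>{\<omega>. \<omega> \<subseteq> E \<and> A \<omega>}. rc_weight V E T B p q \<omega>)
     / (\<Sum>\<omega>\<in>Pow E. rc_weight V E T B p q \<omega>)"

definition PhiTB_cond :: "'v set \<Rightarrow> 'v set set \<Rightarrow> 'v set \<Rightarrow> 'v set \<Rightarrow> real \<Rightarrow> real
    \<Rightarrow> ('v set set \<Rightarrow> bool) \<Rightarrow> ('v set set \<Rightarrow> bool) \<Rightarrow> real" where
  "PhiTB_cond V E T B p q A H =
     PhiTB V E T B p q (\<lambda>\<omega>. A \<omega> \<and> H \<omega>) / PhiTB V E T B p q H"

definition edge_set_dist :: "nat \<Rightarrow> int list set \<Rightarrow> int list set set \<Rightarrow> real" where
  "edge_set_dist d e S = Inf {real_of_int (l1 d x y) | x y f. f \<in> S \<and> x \<in> e \<and> y \<in> f}"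

end

theory Submission
  imports Defs "HOL-Library.Transitive_Closure_Table"
begin

(* Condition on T and B being disconnected and let C be a closed cut containing an
   edge e at distance at least \<kappa> c ln |\<Lambda>| from all other pivotal edges and from the complement of the
   box.  The cube Q of radius about \<kappa> c ln |\<Lambda>| / d around e meets no pivotal edge other than e
   and no boundary vertex, and one finds a *-connected chain of m ~ 3 c ln |\<Lambda>| closed edges in Q whose
   opening still keeps T and B apart: it is a piece of the edge boundary between two clusters inside
   Q, which is *-connected by Timar's theorem and reaches from e to the surface of Q.  Opening m
   closed edges multiplies the random-cluster weight by at least (p / (q (1 - p)))^m, and there are at
   most |\<Lambda>| 9^(d m) such chains, so the conditional probability is at most
   |\<Lambda>| (9^d q (1 - p) / p)^m, which is below |\<Lambda>|^-c once p is close to 1. *)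

definition incr :: "int list \<Rightarrow> nat \<Rightarrow> int list" where
  "incr v i = v[i := v!i + 1]"

definition decr :: "int list \<Rightarrow> nat \<Rightarrow> int list" where
  "decr v i = v[i := v!i - 1]"

definition lattice_rel :: "nat \<Rightarrow> (int list \<times> int list) set" where
  "lattice_rel d = {(u,v). lattice_adj d u v}"

lemma length_incr [simp]: "length (incr v i) = length v"
  by (simp add: incr_def)

lemma length_decr [simp]: "length (decr v i) = length v"
  by (simp add: decr_def)

lemma nth_incr: "i < length v \<Longrightarrow> incr v i ! k = (if k = i then v!i + 1 else v!k)"
  by (simp add: incr_def nth_list_update)

lemma nth_decr: "i < length v \<Longrightarrow> decr v i ! k = (if k = i then v!i - 1 else v!k)"
  by (simp add: decr_def nth_list_update)

lemma incr_decr: "i < length v \<Longrightarrow> incr (decr v i) i = v"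
  unfolding incr_def decr_def by simp

lemma decr_incr: "i < length v \<Longrightarrow> decr (incr v i) i = v"
  unfolding incr_def decr_def by simp

lemma incr_commute: "i \<noteq> j \<Longrightarrow> incr (incr v i) j = incr (incr v j) i"
  unfolding incr_def by (simp add: list_update_swap nth_list_update)

lemma incr_decr_commute: "i \<noteq> j \<Longrightarrow> incr (decr v j) i = decr (incr v i) j"
  unfolding incr_def decr_def by (simp add: list_update_swap nth_list_update)

lemma incr_neq: "i < length v \<Longrightarrow> incr v i \<noteq> v"
  by (metis nth_incr add_cancel_left_right one_neq_zero)

lemma sum_nth_list_update:
  fixes f :: "nat \<Rightarrow> int \<Rightarrow> 'b::comm_monoid_add"
  assumes "length u = d" "i < d"
  shows "(\<Sum>k<d. f k ((u[i:=a])!k)) + f i (u!i) = (\<Sum>k<d. f k (u!k)) + f i a"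
proof -
  have "(\<Sum>k<d. f k ((u[i:=a])!k)) = f i a + (\<Sum>k\<in>{..<d}-{i}. f k ((u[i:=a])!k))"
    using assms by (subst sum.remove[of _ i]) auto
  also have "(\<Sum>k\<in>{..<d}-{i}. f k ((u[i:=a])!k)) = (\<Sum>k\<in>{..<d}-{i}. f k (u!k))"
    by (intro sum.cong) auto
  finally have "(\<Sum>k<d. f k ((u[i:=a])!k)) = f i a + (\<Sum>k\<in>{..<d}-{i}. f k (u!k))" .
  moreover have "(\<Sum>k<d. f k (u!k)) = f i (u!i) + (\<Sum>k\<in>{..<d}-{i}. f k (u!k))"
    using assms by (subst sum.remove[of _ i]) auto
  ultimately show ?thesis by (simp add: ac_simps)
qed

lemma l1_nonneg: "l1 d u v \<ge> 0"
  unfolding l1_def by (intro sum_nonneg) auto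

lemma l1_sym: "l1 d u v = l1 d v u"
  unfolding l1_def by (intro sum.cong) auto

lemma l1_incr: assumes "length u = d" "i < d" shows "l1 d u (incr u i) = 1"
proof -
  have "l1 d u (incr u i) = (\<Sum>k<d. if k = i then 1 else 0)"
    unfolding l1_def using assms by (intro sum.cong) (auto simp: nth_incr)
  also have "\<dots> = 1" using assms by simp
  finally show ?thesis .
qed

lemma l1_eq_1_imp_incr:
  assumes "length u = d" "length v = d" "l1 d u v = 1"
  shows "\<exists>i<d. v = incr u i \<or> u = incr v i"
proof -
  have "\<exists>i<d. u!i \<noteq> v!i"
  proof (rule ccontr)
    assume "\<not> ?thesis"
    hence "l1 d u v = 0" unfolding l1_def by (intro sum.neutral) auto
    with assms show False by simp
  qed
  then obtain i where i: "i < d" "u!i \<noteq> v!i" by blast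
  have split: "l1 d u v = \<bar>u!i - v!i\<bar> + (\<Sum>k\<in>{..<d}-{i}. \<bar>u!k - v!k\<bar>)"
    unfolding l1_def using i by (subst sum.remove[of _ i]) auto
  have "(\<Sum>k\<in>{..<d}-{i}. \<bar>u!k - v!k\<bar>) \<ge> 0" by (intro sum_nonneg) auto
  with split i assms(3) have rest: "(\<Sum>k\<in>{..<d}-{i}. \<bar>u!k - v!k\<bar>) = 0" and one: "\<bar>u!i - v!i\<bar> = 1"
    by linarith+
  have others: "\<forall>k\<in>{..<d}-{i}. u!k = v!k"
    using rest by (subst (asm) sum_nonneg_eq_0_iff) auto
  show ?thesis
  proof (cases "v!i = u!i + 1")
    case True
    have "v = incr u i"
      by (rule nth_equalityI) (use assms i others True in \<open>auto simp: nth_incr\<close>)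
    with i show ?thesis by blast
  next
    case False
    hence "u!i = v!i + 1" using one by auto
    hence "u = incr v i"
      by (intro nth_equalityI) (use assms i others in \<open>auto simp: nth_incr\<close>)
    with i show ?thesis by blast
  qed
qed

lemma lattice_adj_iff:
  "lattice_adj d u v \<longleftrightarrow> length u = d \<and> length v = d \<and> (\<exists>i<d. v = incr u i \<or> u = incr v i)"
proof
  assume "lattice_adj d u v"
  thus "length u = d \<and> length v = d \<and> (\<exists>i<d. v = incr u i \<or> u = incr v i)"
    unfolding lattice_adj_def lattice_pt_def using l1_eq_1_imp_incr by blast
next
  assume a: "length u = d \<and> length v = d \<and> (\<exists>i<d. v = incr u i \<or> u = incr v i)"
  then obtain i where "i < d" "v = incr u i \<or> u = incr v i" by blast
  thus "lattice_adj d u v" using a l1_incr[of u d i] l1_incr[of v d i] l1_sym[of d u v]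
    unfolding lattice_adj_def lattice_pt_def by auto
qed

lemma lattice_adj_sym: "lattice_adj d u v \<Longrightarrow> lattice_adj d v u"
  unfolding lattice_adj_iff by blast

lemma lattice_adj_incr: "length u = d \<Longrightarrow> i < d \<Longrightarrow> lattice_adj d u (incr u i)"
  unfolding lattice_adj_iff by auto

lemma lattice_adj_neq: "lattice_adj d u v \<Longrightarrow> u \<noteq> v"
  unfolding lattice_adj_iff using incr_neq by metis

lemma lattice_adj_coord_le: assumes "lattice_adj d u v" "k < d" shows "\<bar>u!k - v!k\<bar> \<le> 1"
proof -
  obtain i where i: "i < d" "v = incr u i \<or> u = incr v i" and l: "length u = d" "length v = d"
    using assms(1) unfolding lattice_adj_iff by blast
  show ?thesis
  proof (cases "v = incr u i")
    case True thus ?thesis using i l assms(2) nth_incr[of i u k] by auto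
  next
    case False hence "u = incr v i" using i by blast
    thus ?thesis using i l assms(2) nth_incr[of i v k] by auto
  qed
qed

lemma lattice_rel_sym: "(u,v) \<in> lattice_rel d \<Longrightarrow> (v,u) \<in> lattice_rel d"
  unfolding lattice_rel_def using lattice_adj_sym by auto

lemma lattice_rel_on_sym:
  "(a,b) \<in> (lattice_rel d \<inter> S \<times> S)\<^sup>* \<Longrightarrow> (b,a) \<in> (lattice_rel d \<inter> S \<times> S)\<^sup>*"
proof (induction rule: rtrancl_induct)
  case (step y z)
  have "(z,y) \<in> lattice_rel d \<inter> S \<times> S" using step(2) lattice_rel_sym by blast
  thus ?case using step(3) by (rule converse_rtrancl_into_rtrancl)
qed simp

lemma lattice_rel_on_mono:
  assumes "S \<subseteq> S'" "(a,b) \<in> (lattice_rel d \<inter> S \<times> S)\<^sup>*"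
  shows "(a,b) \<in> (lattice_rel d \<inter> S' \<times> S')\<^sup>*"
proof -
  have "lattice_rel d \<inter> S \<times> S \<subseteq> lattice_rel d \<inter> S' \<times> S'" using assms(1) by blast
  thus ?thesis using rtrancl_mono assms(2) by blast
qed

definition int_box :: "nat \<Rightarrow> (nat \<Rightarrow> int) \<Rightarrow> (nat \<Rightarrow> int) \<Rightarrow> int list set" where
  "int_box d lo hi = {v. length v = d \<and> (\<forall>i<d. lo i \<le> v!i \<and> v!i \<le> hi i)}"

lemma int_box_length: "v \<in> int_box d lo hi \<Longrightarrow> length v = d"
  unfolding int_box_def by simp

lemma int_box_connected:
  assumes "u \<in> int_box d lo hi" "v \<in> int_box d lo hi"
  shows "(u,v) \<in> (lattice_rel d \<inter> int_box d lo hi \<times> int_box d lo hi)\<^sup>*"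
proof -
  let ?P = "int_box d lo hi"
  let ?dist = "\<lambda>u. \<Sum>k<d. nat \<bar>u!k - v!k\<bar>"
  have "(u,v) \<in> (lattice_rel d \<inter> ?P \<times> ?P)\<^sup>*" if "u \<in> ?P" "?dist u = n" for u n
    using that
  proof (induction n arbitrary: u)
    case 0
    hence "\<forall>k\<in>{..<d}. nat \<bar>u!k - v!k\<bar> = 0" by simp
    hence "u = v" using 0 assms(2) unfolding int_box_def by (intro nth_equalityI) auto
    thus ?case by simp
  next
    case (Suc n)
    have lu: "length u = d" using Suc.prems(1) by (rule int_box_length)
    have "\<exists>i<d. u!i \<noteq> v!i"
    proof (rule ccontr)
      assume "\<not> ?thesis"
      hence "?dist u = 0" by (intro sum.neutral) auto
      with Suc.prems(2) show False by simp
    qed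
    then obtain i where i: "i < d" "u!i \<noteq> v!i" by blast
    have upd: "?dist (u[i := a]) + nat \<bar>u!i - v!i\<bar> = ?dist u + nat \<bar>a - v!i\<bar>" for a
      using sum_nth_list_update[OF lu i(1), of "\<lambda>k x. nat \<bar>x - v!k\<bar>" a] by simp
    define w where "w = u[i := u!i + (if u!i < v!i then 1 else -1)]"
    have wP: "w \<in> ?P" using Suc.prems(1) assms(2) i unfolding int_box_def w_def
      by (auto simp: nth_list_update)
    have "?dist w = n" using upd[of "u!i + (if u!i < v!i then 1 else -1)"] Suc.prems(2) i(2)
      unfolding w_def by (auto split: if_splits)
    hence "(w,v) \<in> (lattice_rel d \<inter> ?P \<times> ?P)\<^sup>*" using Suc.IH wP by blast
    moreover have "lattice_adj d u w"
    proof (cases "u!i < v!i")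
      case True
      thus ?thesis using lattice_adj_incr[OF lu i(1)] unfolding w_def incr_def by simp
    next
      case False
      have "u = incr w i" using lu i unfolding w_def incr_def using False by simp
      thus ?thesis using lattice_adj_sym[OF lattice_adj_incr[of w d i]] lu i(1)
        unfolding w_def by simp
    qed
    hence "(u,w) \<in> lattice_rel d \<inter> ?P \<times> ?P" using Suc.prems(1) wP unfolding lattice_rel_def by auto
    ultimately show ?case by (meson converse_rtrancl_into_rtrancl)
  qed
  thus ?thesis using assms(1) by blast
qed


section \<open>A discrete Poincare lemma on integer boxes\<close>

definition square_condition :: "nat \<Rightarrow> int list set \<Rightarrow> int list set set \<Rightarrow> bool" where
  "square_condition d P X \<longleftrightarrow> (\<forall>v i j. i < d \<longrightarrow> j < d \<longrightarrow> i \<noteq> j \<longrightarrow> v \<in> P \<longrightarrow> incr v i \<in> P \<longrightarrow>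
      incr v j \<in> P \<longrightarrow> incr (incr v i) j \<in> P \<longrightarrow>
      (({v, incr v i} \<in> X) = ({v, incr v j} \<in> X)) =
      (({incr v i, incr (incr v i) j} \<in> X) = ({incr v j, incr (incr v i) j} \<in> X)))"

(* potential d lo X v is the parity of the number of X-edges on the monotone path from v down to
   the corner lo that always lowers the last coordinate still above lo; height d lo v is its
   length. *)
primrec potential_rec :: "nat \<Rightarrow> (nat \<Rightarrow> int) \<Rightarrow> int list set set \<Rightarrow> nat \<Rightarrow> int list \<Rightarrow> bool" where
  "potential_rec d lo X 0 v = False"
| "potential_rec d lo X (Suc n) v = (if (\<exists>k<d. lo k < v!k)
     then (potential_rec d lo X n (decr v (GREATEST k. k<d \<and> lo k < v!k)) \<noteq>
           ({decr v (GREATEST k. k<d \<and> lo k < v!k), v} \<in> X))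
     else False)"

definition height :: "nat \<Rightarrow> (nat \<Rightarrow> int) \<Rightarrow> int list \<Rightarrow> nat" where
  "height d lo v = (\<Sum>k<d. nat (v!k - lo k))"

definition potential :: "nat \<Rightarrow> (nat \<Rightarrow> int) \<Rightarrow> int list set set \<Rightarrow> int list \<Rightarrow> bool" where
  "potential d lo X v = potential_rec d lo X (height d lo v) v"

lemma height_decr:
  assumes "length v = d" "k < d" "lo k < v!k"
  shows "height d lo v = Suc (height d lo (decr v k))"
proof -
  have "height d lo (decr v k) + nat (v!k - lo k) = height d lo v + nat (v!k - 1 - lo k)"
    unfolding height_def decr_def
    using sum_nth_list_update[OF assms(1,2), of "\<lambda>k x. nat (x - lo k)" "v!k - 1"] by simp
  thus ?thesis using assms(3) by linarith
qed

lemma potential_decr: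
  assumes "length v = d" "k < d" "lo k < v!k" "\<And>j. j < d \<Longrightarrow> k < j \<Longrightarrow> \<not> lo j < v!j"
  shows "potential d lo X v = (potential d lo X (decr v k) \<noteq> ({decr v k, v} \<in> X))"
proof -
  have G: "(GREATEST j. j<d \<and> lo j < v!j) = k"
    by (rule Greatest_equality) (use assms in \<open>auto simp: not_less[symmetric]\<close>)
  have "\<exists>j<d. lo j < v!j" using assms by blast
  thus ?thesis
    unfolding potential_def height_decr[of v d k lo, OF assms(1-3)] potential_rec.simps(2) G by simp
qed

lemma greatest_coord_above:
  assumes "i < d" "lo i < v!i"
  defines "k \<equiv> GREATEST j. j < d \<and> lo j < v!j"
  shows "k < d" "lo k < v!k" "i \<le> k" "\<And>j. j < d \<Longrightarrow> k < j \<Longrightarrow> \<not> lo j < v!j"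
proof -
  let ?P = "\<lambda>j. j < d \<and> lo j < v!j"
  have bound: "\<forall>j. ?P j \<longrightarrow> j \<le> d" by auto
  show "k < d" "lo k < v!k" using GreatestI_nat[of ?P i d] assms unfolding k_def by auto
  show "i \<le> k" using Greatest_le_nat[of ?P i d] assms unfolding k_def by auto
  show "\<not> lo j < v!j" if "j < d" "k < j" for j
  proof
    assume "lo j < v!j"
    hence "j \<le> k" using Greatest_le_nat[of ?P j d] that(1) unfolding k_def by auto
    thus False using that(2) by simp
  qed
qed

lemma potential_incr:
  assumes sq: "square_condition d (int_box d lo hi) X"
    and "v \<in> int_box d lo hi" "i < d" "incr v i \<in> int_box d lo hi"
  shows "potential d lo X (incr v i) = (potential d lo X v \<noteq> ({v, incr v i} \<in> X))"
  using assms(2-4)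
proof (induction "height d lo v" arbitrary: v i rule: less_induct)
  case less
  let ?P = "int_box d lo hi"
  note vP = less.prems(1) and i = less.prems(2) and svP = less.prems(3)
  define v' where "v' = incr v i"
  have lv: "length v = d" using vP by (rule int_box_length)
  have lv': "length v' = d" using lv unfolding v'_def by simp
  have v'i: "v'!i = v!i + 1" and v'o: "\<And>j. j \<noteq> i \<Longrightarrow> v'!j = v!j"
    unfolding v'_def using nth_incr[of i v] lv i by auto
  have "lo i < v'!i" using vP i v'i unfolding int_box_def by auto
  \<comment> \<open>Both potentials are computed along paths that first lower the coordinate k.\<close>
  define k where "k = (GREATEST j. j < d \<and> lo j < v'!j)"
  note k = greatest_coord_above[of i d lo v', OF i \<open>lo i < v'!i\<close>, folded k_def]
  show ?case
  proof (cases "k = i")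
    case True
    have "decr v' i = v" unfolding v'_def using decr_incr lv i by simp
    thus ?thesis using potential_decr[OF lv' k(1,2) k(4), of X] True
      unfolding v'_def by (simp add: insert_commute)
  next
    case False
    have lokv: "lo k < v!k" using k(2) v'o False by simp
    have above: "\<And>j. j < d \<Longrightarrow> k < j \<Longrightarrow> \<not> lo j < v!j" using k(3,4) v'o False by fastforce
    define u where "u = decr v k"
    define u' where "u' = decr v' k"
    have u'u: "u' = incr u i" unfolding u'_def u_def v'_def using incr_decr_commute False by simp
    have vu: "v = incr u k" unfolding u_def using incr_decr lv k(1) by simp
    have v'u': "v' = incr u' k" unfolding u'_def using incr_decr lv' k(1) by simp
    have uP: "u \<in> ?P" using vP lokv k(1) unfolding int_box_def u_def by (auto simp: nth_decr)
    have u'P: "u' \<in> ?P" using svP k(1,2) unfolding int_box_def u'_def v'_def[symmetric]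
      by (auto simp: nth_decr)
    have "height d lo u < height d lo v" using height_decr[of v d k lo, OF lv k(1) lokv] unfolding u_def by simp
    hence IH: "potential d lo X u' = (potential d lo X u \<noteq> ({u, u'} \<in> X))"
      using less.hyps[OF _ uP i] u'P unfolding u'u by blast
    have g1: "potential d lo X v = (potential d lo X u \<noteq> ({u, v} \<in> X))"
      using potential_decr[OF lv k(1) lokv above, of X] unfolding u_def by simp
    have g2: "potential d lo X v' = (potential d lo X u' \<noteq> ({u', v'} \<in> X))"
      using potential_decr[OF lv' k(1,2,4), of X] unfolding u'_def by simp
    have "incr u i \<in> ?P" "incr u k \<in> ?P" "incr (incr u i) k \<in> ?P"
      using u'P vP svP u'u vu v'u' unfolding v'_def by simp_all
    moreover have "i \<noteq> k" using False by simp
    ultimately have "(({u, incr u i} \<in> X) = ({u, incr u k} \<in> X)) =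
        (({incr u i, incr (incr u i) k} \<in> X) = ({incr u k, incr (incr u i) k} \<in> X))"
      using sq i k(1) uP unfolding square_condition_def by presburger
    hence "(({u, u'} \<in> X) = ({u, v} \<in> X)) = (({u', v'} \<in> X) = ({v, v'} \<in> X))"
      using u'u vu v'u' by simp
    thus ?thesis using IH g1 g2 unfolding v'_def by argo
  qed
qed

lemma square_condition_coboundary:
  assumes "square_condition d (int_box d lo hi) X"
    and "p \<in> int_box d lo hi" "q \<in> int_box d lo hi" "lattice_adj d p q"
  shows "{p,q} \<in> X \<longleftrightarrow> potential d lo X p \<noteq> potential d lo X q"
proof -
  obtain i where i: "i < d" "q = incr p i \<or> p = incr q i" using assms(4) unfolding lattice_adj_iff by blast
  show ?thesis
  proof (cases "q = incr p i")
    case True thus ?thesis using potential_incr[OF assms(1,2) i(1)] assms(3) by auto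
  next
    case False
    hence "p = incr q i" using i by blast
    thus ?thesis using potential_incr[OF assms(1,3) i(1)] assms(2) by (auto simp: insert_commute)
  qed
qed

lemma rtrancl_fun_eq:
  assumes "(a,b) \<in> R\<^sup>*" "\<And>y z. (y,z) \<in> R \<Longrightarrow> g y = g z"
  shows "g a = g b"
  using assms by (induction rule: rtrancl_induct) auto

section \<open>Timar's theorem on *-connected boundaries\<close>

definition near :: "nat \<Rightarrow> int list set \<Rightarrow> int list set \<Rightarrow> bool" where
  "near d f g \<longleftrightarrow> (\<forall>a\<in>f. \<forall>b\<in>g. \<forall>i<d. \<bar>a!i - b!i\<bar> \<le> 1)"

definition near_rel :: "nat \<Rightarrow> int list set set \<Rightarrow> (int list set \<times> int list set) set" where
  "near_rel d F = {(f,g). near d f g} \<inter> F \<times> F"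

definition edge_boundary :: "nat \<Rightarrow> int list set \<Rightarrow> int list set \<Rightarrow> int list set set" where
  "edge_boundary d A B0 = {{a,b} | a b. a \<in> A \<and> b \<in> B0 \<and> lattice_adj d a b}"

lemma near_square:
  assumes "length v = d" "i < d" "j < d" "i \<noteq> j"
    and "f \<subseteq> {v, incr v i, incr v j, incr (incr v i) j}" "g \<subseteq> {v, incr v i, incr v j, incr (incr v i) j}"
  shows "near d f g"
proof -
  have coord: "w!k = v!k \<or> w!k = v!k + 1"
    if "w \<in> {v, incr v i, incr v j, incr (incr v i) j}" "k < d" for w k
    using that assms(1-4) nth_incr[of i v k] nth_incr[of j v k] nth_incr[of j "incr v i" k]
    by (cases "k = i"; cases "k = j") auto
  have "\<bar>a!k - b!k\<bar> \<le> 1" if "a \<in> f" "b \<in> g" "k < d" for a b k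
    using coord[of a k] coord[of b k] that assms(5,6) by fastforce
  thus ?thesis unfolding near_def by blast
qed

lemma edge_boundary_iff:
  assumes "A \<inter> B0 = {}" and closed: "\<And>b v. b \<in> B0 \<Longrightarrow> v \<in> P \<Longrightarrow> lattice_adj d b v \<Longrightarrow> v \<in> A \<union> B0"
    and "A \<subseteq> P" "p \<in> P" "q \<in> P" "lattice_adj d p q"
  shows "{p,q} \<in> edge_boundary d A B0 \<longleftrightarrow> (p \<in> B0) \<noteq> (q \<in> B0)"
proof
  assume "{p,q} \<in> edge_boundary d A B0"
  then obtain a b where ab: "{p,q} = {a,b}" "a \<in> A" "b \<in> B0" unfolding edge_boundary_def by blast
  have "a \<notin> B0" using ab assms(1) by blast
  thus "(p \<in> B0) \<noteq> (q \<in> B0)" using ab lattice_adj_neq[OF assms(6)] by (auto simp: doubleton_eq_iff)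
next
  assume h: "(p \<in> B0) \<noteq> (q \<in> B0)"
  show "{p,q} \<in> edge_boundary d A B0"
  proof (cases "p \<in> B0")
    case True
    hence "q \<in> A" using h closed[OF True assms(5,6)] by blast
    thus ?thesis unfolding edge_boundary_def using True lattice_adj_sym[OF assms(6)]
      by (auto simp: insert_commute intro!: exI)
  next
    case False
    hence "q \<in> B0" using h by simp
    hence "p \<in> A" using False closed[OF _ assms(4) lattice_adj_sym[OF assms(6)]] by blast
    thus ?thesis unfolding edge_boundary_def using \<open>q \<in> B0\<close> assms(6) by blast
  qed
qed

lemma near_closed_square_condition:
  assumes AP: "A \<subseteq> int_box d lo hi" and disj: "A \<inter> B0 = {}"
    and closed: "\<And>b v. b \<in> B0 \<Longrightarrow> v \<in> int_box d lo hi \<Longrightarrow> lattice_adj d b v \<Longrightarrow> v \<in> A \<union> B0"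
    and Xbd: "X \<subseteq> edge_boundary d A B0"
    and Xclosed: "\<And>f g. f \<in> X \<Longrightarrow> g \<in> edge_boundary d A B0 \<Longrightarrow> near d f g \<Longrightarrow> g \<in> X"
  shows "square_condition d (int_box d lo hi) X"
  unfolding square_condition_def
proof (intro allI impI)
  let ?P = "int_box d lo hi" and ?bd = "edge_boundary d A B0"
  have bdi: "{p,q} \<in> ?bd \<longleftrightarrow> (p \<in> B0) \<noteq> (q \<in> B0)" if "p \<in> ?P" "q \<in> ?P" "lattice_adj d p q" for p q
    by (rule edge_boundary_iff[OF disj closed AP that])
  fix v i j assume i: "i < d" and j: "j < d" and ij: "i \<noteq> j" and v0: "v \<in> ?P"
    and v1: "incr v i \<in> ?P" and v2: "incr v j \<in> ?P" and v3: "incr (incr v i) j \<in> ?P"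
  have lv: "length v = d" using v0 by (rule int_box_length)
  let ?S = "{v, incr v i, incr v j, incr (incr v i) j}"
  let ?e01 = "{v, incr v i}" and ?e02 = "{v, incr v j}"
    and ?e13 = "{incr v i, incr (incr v i) j}" and ?e23 = "{incr v j, incr (incr v i) j}"
  have b01: "?e01 \<in> ?bd \<longleftrightarrow> (v \<in> B0) \<noteq> (incr v i \<in> B0)"
    using bdi[OF v0 v1 lattice_adj_incr[OF lv i]] .
  have b02: "?e02 \<in> ?bd \<longleftrightarrow> (v \<in> B0) \<noteq> (incr v j \<in> B0)"
    using bdi[OF v0 v2 lattice_adj_incr[OF lv j]] .
  have b13: "?e13 \<in> ?bd \<longleftrightarrow> (incr v i \<in> B0) \<noteq> (incr (incr v i) j \<in> B0)"
    using bdi[OF v1 v3 lattice_adj_incr] lv j by simp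
  have b23: "?e23 \<in> ?bd \<longleftrightarrow> (incr v j \<in> B0) \<noteq> (incr (incr v i) j \<in> B0)"
    using bdi[OF v2 v3] lattice_adj_incr[of "incr v j" d i] lv i incr_commute[OF ij, of v] by simp
  show "((?e01 \<in> X) = (?e02 \<in> X)) = ((?e13 \<in> X) = (?e23 \<in> X))"
  proof (cases "?e01 \<in> X \<or> ?e02 \<in> X \<or> ?e13 \<in> X \<or> ?e23 \<in> X")
    case True
    then obtain e0 where e0: "e0 \<in> X" "e0 \<subseteq> ?S" by blast
    have eq: "(e \<in> X) = (e \<in> ?bd)" if "e \<subseteq> ?S" for e
      using Xclosed[OF e0(1) _ near_square[OF lv i j ij e0(2) that]] Xbd by blast
    have "(?e01 \<in> X) = (?e01 \<in> ?bd)" "(?e02 \<in> X) = (?e02 \<in> ?bd)"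
      "(?e13 \<in> X) = (?e13 \<in> ?bd)" "(?e23 \<in> X) = (?e23 \<in> ?bd)" by (rule eq; blast)+
    thus ?thesis using b01 b02 b13 b23 by argo
  qed blast
qed

(* If the *-component X of f1 in the boundary missed f2, then X would satisfy the square condition
   (a square meeting X has all its boundary edges in X), hence be the coboundary of a potential g;
   g is constant on the connected sets A and B0, so X would contain all boundary edges or none. *)
theorem edge_boundary_near_connected:
  fixes A B0 :: "int list set"
  assumes AP: "A \<subseteq> int_box d lo hi" and BP: "B0 \<subseteq> int_box d lo hi" and disj: "A \<inter> B0 = {}"
   and closed: "\<And>b v. b \<in> B0 \<Longrightarrow> v \<in> int_box d lo hi \<Longrightarrow> lattice_adj d b v \<Longrightarrow> v \<in> A \<union> B0"
   and connA: "\<And>a1 a2. a1 \<in> A \<Longrightarrow> a2 \<in> A \<Longrightarrow> (a1,a2) \<in> (lattice_rel d \<inter> A \<times> A)\<^sup>*"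
   and connB: "\<And>b1 b2. b1 \<in> B0 \<Longrightarrow> b2 \<in> B0 \<Longrightarrow> (b1,b2) \<in> (lattice_rel d \<inter> B0 \<times> B0)\<^sup>*"
   and f1: "f1 \<in> edge_boundary d A B0" and f2: "f2 \<in> edge_boundary d A B0"
  shows "(f1,f2) \<in> (near_rel d (edge_boundary d A B0))\<^sup>*"
proof (rule ccontr)
  let ?P = "int_box d lo hi"
  let ?bd = "edge_boundary d A B0"
  assume nc: "(f1,f2) \<notin> (near_rel d ?bd)\<^sup>*"
  define X where "X = {f \<in> ?bd. (f1,f) \<in> (near_rel d ?bd)\<^sup>*}"
  have Xbd: "X \<subseteq> ?bd" unfolding X_def by blast
  have Xclosed: "g \<in> X" if "f \<in> X" "g \<in> ?bd" "near d f g" for f g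
  proof -
    have "(f,g) \<in> near_rel d ?bd" using that Xbd unfolding near_rel_def by blast
    thus ?thesis using that unfolding X_def by (blast intro: rtrancl_into_rtrancl)
  qed
  have bdi: "{p,q} \<in> ?bd \<longleftrightarrow> (p \<in> B0) \<noteq> (q \<in> B0)" if "p \<in> ?P" "q \<in> ?P" "lattice_adj d p q" for p q
    by (rule edge_boundary_iff[OF disj closed AP that])
  have sq: "square_condition d ?P X"
    by (rule near_closed_square_condition[OF AP disj closed Xbd Xclosed])
  let ?g = "potential d lo X"
  have ga: "{p,q} \<in> X \<longleftrightarrow> ?g p \<noteq> ?g q" if "p \<in> ?P" "q \<in> ?P" "lattice_adj d p q" for p q
    by (rule square_condition_coboundary[OF sq that])
  have g_const: "?g s = ?g t" if "(s,t) \<in> (lattice_rel d \<inter> S \<times> S)\<^sup>*" "S = A \<or> S = B0" for s t S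
  proof (rule rtrancl_fun_eq[OF that(1)])
    fix y z assume "(y,z) \<in> lattice_rel d \<inter> S \<times> S"
    hence yz: "y \<in> S" "z \<in> S" "lattice_adj d y z" unfolding lattice_rel_def by auto
    hence P: "y \<in> ?P" "z \<in> ?P" using that(2) AP BP by auto
    moreover have "{y,z} \<notin> ?bd" using bdi[OF P yz(3)] yz(1,2) that(2) disj by auto
    ultimately show "?g y = ?g z" using ga[of y z] Xbd yz(3) by blast
  qed
  obtain a1 b1 where ab1: "f1 = {a1,b1}" "a1 \<in> A" "b1 \<in> B0" "lattice_adj d a1 b1"
    using f1 unfolding edge_boundary_def by blast
  obtain a2 b2 where ab2: "f2 = {a2,b2}" "a2 \<in> A" "b2 \<in> B0" "lattice_adj d a2 b2"
    using f2 unfolding edge_boundary_def by blast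
  have "f1 \<in> X" unfolding X_def using f1 by simp
  hence "?g a1 \<noteq> ?g b1" using ga[of a1 b1] ab1 AP BP by auto
  moreover have "f2 \<notin> X" unfolding X_def using nc by simp
  hence "?g a2 = ?g b2" using ga[of a2 b2] ab2 AP BP by auto
  moreover have "?g a1 = ?g a2" using g_const connA ab1 ab2 by blast
  moreover have "?g b1 = ?g b2" using g_const connB ab1 ab2 by blast
  ultimately show False by simp
qed


definition cube :: "nat \<Rightarrow> int list \<Rightarrow> int \<Rightarrow> int list set" where
  "cube d c \<rho> = int_box d (\<lambda>i. c!i - \<rho>) (\<lambda>i. c!i + \<rho>)"

definition surface :: "nat \<Rightarrow> int list \<Rightarrow> int \<Rightarrow> int list set" where
  "surface d c \<rho> = {v \<in> cube d c \<rho>. \<exists>i<d. \<bar>v!i - c!i\<bar> = \<rho>}"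

definition face :: "nat \<Rightarrow> int list \<Rightarrow> int \<Rightarrow> nat \<Rightarrow> int \<Rightarrow> int list set" where
  "face d c \<rho> i s = int_box d (\<lambda>k. if k = i then c!i + s else c!k - \<rho>)
                              (\<lambda>k. if k = i then c!i + s else c!k + \<rho>)"

lemma cube_iff: "v \<in> cube d c \<rho> \<longleftrightarrow> length v = d \<and> (\<forall>i<d. \<bar>v!i - c!i\<bar> \<le> \<rho>)"
  unfolding cube_def int_box_def by (auto simp: abs_le_iff)

lemma cube_mono: "r \<le> r' \<Longrightarrow> cube d c r \<subseteq> cube d c r'"
  by (auto simp: cube_iff) (meson order_trans)

lemma cube_connected:
  "u \<in> cube d c \<rho> \<Longrightarrow> v \<in> cube d c \<rho> \<Longrightarrow> (u,v) \<in> (lattice_rel d \<inter> cube d c \<rho> \<times> cube d c \<rho>)\<^sup>*"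
  unfolding cube_def by (rule int_box_connected)

lemma exit_in_surface:
  assumes "u \<in> cube d c \<rho>" "lattice_adj d u w" "w \<notin> cube d c \<rho>"
  shows "u \<in> surface d c \<rho>"
proof -
  have "length w = d" using assms(2) unfolding lattice_adj_iff by auto
  then obtain k where k: "k < d" "\<bar>w!k - c!k\<bar> > \<rho>" using assms(3) cube_iff by (auto simp: not_le)
  have "\<bar>u!k - w!k\<bar> \<le> 1" using lattice_adj_coord_le[OF assms(2) k(1)] .
  moreover have "\<bar>u!k - c!k\<bar> \<le> \<rho>" using assms(1) k(1) cube_iff by blast
  ultimately have "\<bar>u!k - c!k\<bar> = \<rho>" using k(2) by linarith
  thus ?thesis unfolding surface_def using assms(1) k(1) by blast
qed

lemma rtrancl_first_exit:
  assumes "(u,v) \<in> R\<^sup>*" "u \<in> X" "v \<notin> X"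
  shows "\<exists>a b. (u,a) \<in> (R \<inter> X \<times> X)\<^sup>* \<and> a \<in> X \<and> b \<notin> X \<and> (a,b) \<in> R"
  using assms
proof (induction rule: converse_rtrancl_induct)
  case (step y z)
  show ?case
  proof (cases "z \<in> X")
    case True
    then obtain a b where "(z,a) \<in> (R \<inter> X \<times> X)\<^sup>*" "a \<in> X" "b \<notin> X" "(a,b) \<in> R" using step by blast
    moreover have "(y,z) \<in> R \<inter> X \<times> X" using step True by blast
    ultimately show ?thesis by (blast intro: converse_rtrancl_into_rtrancl)
  qed (use step in blast)
qed simp

lemma rtrancl_exit_cube:
  assumes "(s,t) \<in> R\<^sup>*" "R \<subseteq> lattice_rel d" "s \<in> cube d c \<rho>" "t \<notin> cube d c \<rho>"
  obtains a where "(s,a) \<in> (R \<inter> cube d c \<rho> \<times> cube d c \<rho>)\<^sup>*" "a \<in> surface d c \<rho>"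
proof -
  obtain a w where aw: "(s,a) \<in> (R \<inter> cube d c \<rho> \<times> cube d c \<rho>)\<^sup>*" "a \<in> cube d c \<rho>"
      "w \<notin> cube d c \<rho>" "(a,w) \<in> R"
    using rtrancl_first_exit[OF assms(1,3,4)] by blast
  have "lattice_adj d a w" using aw(4) assms(2) unfolding lattice_rel_def by blast
  thus ?thesis using that aw(1) exit_in_surface aw(2,3) by blast
qed

lemma in_faceI: "v \<in> cube d c \<rho> \<Longrightarrow> i < d \<Longrightarrow> v!i - c!i = s \<Longrightarrow> v \<in> face d c \<rho> i s"
  unfolding face_def int_box_def cube_iff by (auto simp: abs_le_iff)

lemma face_subset_surface: assumes "i < d" "\<bar>s\<bar> = \<rho>" shows "face d c \<rho> i s \<subseteq> surface d c \<rho>"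
proof
  fix v assume "v \<in> face d c \<rho> i s"
  hence "length v = d" and b: "\<forall>k<d. (if k = i then c!i + s else c!k - \<rho>) \<le> v!k \<and>
      v!k \<le> (if k = i then c!i + s else c!k + \<rho>)"
    unfolding face_def int_box_def by auto
  have "\<forall>k<d. \<bar>v!k - c!k\<bar> \<le> \<rho>"
  proof (intro allI impI)
    fix k assume "k < d"
    thus "\<bar>v!k - c!k\<bar> \<le> \<rho>" using b assms(2) by (cases "k = i") (auto simp: abs_le_iff)
  qed
  moreover have "\<bar>v!i - c!i\<bar> = \<rho>" using b assms by auto
  ultimately show "v \<in> surface d c \<rho>" unfolding surface_def cube_iff using \<open>length v = d\<close> assms(1) by blast
qed

lemma face_connected:
  assumes "i < d" "\<bar>s\<bar> = \<rho>" "a \<in> face d c \<rho> i s" "b \<in> face d c \<rho> i s"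
  shows "(a,b) \<in> (lattice_rel d \<inter> surface d c \<rho> \<times> surface d c \<rho>)\<^sup>*"
proof -
  have "(a,b) \<in> (lattice_rel d \<inter> face d c \<rho> i s \<times> face d c \<rho> i s)\<^sup>*"
    using int_box_connected assms(3,4) unfolding face_def by blast
  thus ?thesis using lattice_rel_on_mono[OF face_subset_surface[OF assms(1,2)]] by blast
qed

lemma corner_in_face:
  assumes "length c = d" "i < d" "j < d" "i \<noteq> j" "\<bar>s\<bar> = \<rho>" "\<bar>t\<bar> = \<rho>"
  shows "c[i := c!i + s, j := c!j + t] \<in> face d c \<rho> i s"
proof (rule in_faceI)
  show "c[i := c!i + s, j := c!j + t] \<in> cube d c \<rho>"
    unfolding cube_iff using assms by (auto simp: nth_list_update)
qed (use assms in \<open>simp_all add: nth_list_update\<close>)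

(* Every surface point lies on a face, and two faces in different directions share a corner, so
   a path along at most three faces reaches the corner c + \<rho> e_0.  This is where d \<ge> 2 is needed. *)
lemma surface_connected_corner:
  assumes d2: "d \<ge> 2" and lc: "length c = d" and r0: "\<rho> \<ge> 0" and u: "u \<in> surface d c \<rho>"
  shows "(u, c[0 := c!0 + \<rho>]) \<in> (lattice_rel d \<inter> surface d c \<rho> \<times> surface d c \<rho>)\<^sup>*"
proof -
  let ?R = "(lattice_rel d \<inter> surface d c \<rho> \<times> surface d c \<rho>)\<^sup>*"
  let ?z0 = "c[0 := c!0 + \<rho>]"
  have d0: "0 < d" and d1: "1 < d" using d2 by auto
  have r: "\<bar>\<rho>\<bar> = \<rho>" using r0 by simp
  obtain i where i: "i < d" "\<bar>u!i - c!i\<bar> = \<rho>" and uc: "u \<in> cube d c \<rho>"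
    using u unfolding surface_def by blast
  define s where "s = u!i - c!i"
  have s: "\<bar>s\<bar> = \<rho>" using i s_def by simp
  have uF: "u \<in> face d c \<rho> i s" using in_faceI[OF uc i(1)] s_def by simp
  have z0F: "?z0 \<in> face d c \<rho> 0 \<rho>"
    by (rule in_faceI) (use lc r0 d0 in \<open>auto simp: cube_iff nth_list_update\<close>)
  show ?thesis
  proof (cases "i = 0")
    case False
    define z where "z = c[i := c!i + s, 0 := c!0 + \<rho>]"
    have z1: "z \<in> face d c \<rho> i s" unfolding z_def by (rule corner_in_face[OF lc i(1) d0 False s r])
    have "z = c[0 := c!0 + \<rho>, i := c!i + s]" unfolding z_def using False by (simp add: list_update_swap)
    hence z2: "z \<in> face d c \<rho> 0 \<rho>" using corner_in_face[OF lc d0 i(1) _ r s] False by simp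
    have "(u,z) \<in> ?R" by (rule face_connected[OF i(1) s uF z1])
    moreover have "(z,?z0) \<in> ?R" by (rule face_connected[OF d0 r z2 z0F])
    ultimately show ?thesis by (rule rtrancl_trans)
  next
    case True
    show ?thesis
    proof (cases "s = \<rho>")
      case True
      thus ?thesis using face_connected[OF d0 r _ z0F] uF \<open>i = 0\<close> by simp
    next
      case False
      define z1 where "z1 = c[0 := c!0 + s, 1 := c!1 + \<rho>]"
      define z2 where "z2 = c[1 := c!1 + \<rho>, 0 := c!0 + \<rho>]"
      have z1a: "z1 \<in> face d c \<rho> 0 s" unfolding z1_def by (rule corner_in_face[OF lc d0 d1 _ s r]) simp
      have "z1 = c[1 := c!1 + \<rho>, 0 := c!0 + s]" unfolding z1_def by (simp add: list_update_swap)
      hence z1b: "z1 \<in> face d c \<rho> 1 \<rho>" using corner_in_face[OF lc d1 d0 _ r s] by simp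
      have z2a: "z2 \<in> face d c \<rho> 1 \<rho>" unfolding z2_def by (rule corner_in_face[OF lc d1 d0 _ r r]) simp
      have "z2 = c[0 := c!0 + \<rho>, 1 := c!1 + \<rho>]" unfolding z2_def by (simp add: list_update_swap)
      hence z2b: "z2 \<in> face d c \<rho> 0 \<rho>" using corner_in_face[OF lc d0 d1 _ r r] by simp
      have "(u,z1) \<in> ?R" using face_connected[OF d0 s _ z1a] uF \<open>i = 0\<close> by simp
      moreover have "(z1,z2) \<in> ?R" by (rule face_connected[OF d1 r z1b z2a])
      moreover have "(z2,?z0) \<in> ?R" by (rule face_connected[OF d0 r z2b z0F])
      ultimately show ?thesis by (meson rtrancl_trans)
    qed
  qed
qed

lemma surface_connected:
  assumes "d \<ge> 2" "length c = d" "\<rho> \<ge> 0" "u \<in> surface d c \<rho>" "v \<in> surface d c \<rho>"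
  shows "(u, v) \<in> (lattice_rel d \<inter> surface d c \<rho> \<times> surface d c \<rho>)\<^sup>*"
  using surface_connected_corner[OF assms(1-4)]
    lattice_rel_on_sym[OF surface_connected_corner[OF assms(1-3,5)]] by (rule rtrancl_trans)

lemma near_path_props:
  assumes "rtrancl_path (\<lambda>x y. (x,y) \<in> near_rel d F) x xs y" "x \<in> F"
    and edges: "\<And>f. f \<in> F \<Longrightarrow> \<exists>a b. f = {a,b} \<and> lattice_adj d a b"
  shows "set xs \<subseteq> F \<and> successively (near d) (x#xs) \<and>
         (\<forall>a\<in>x. \<forall>b\<in>y. \<forall>i<d. \<bar>a!i - b!i\<bar> \<le> int (length xs) + 1)"
  using assms(1,2)
proof (induction rule: rtrancl_path.induct)
  case (base x)
  obtain a0 b0 where "x = {a0,b0}" "lattice_adj d a0 b0" using edges[OF base] by blast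
  hence "\<forall>a\<in>x. \<forall>b\<in>x. \<forall>i<d. \<bar>a!i - b!i\<bar> \<le> 1"
    using lattice_adj_coord_le lattice_adj_sym by fastforce
  thus ?case by simp
next
  case (step x z zs y)
  have xz: "near d x z" "z \<in> F" using step(1) unfolding near_rel_def by auto
  have IH: "set zs \<subseteq> F \<and> successively (near d) (z#zs) \<and>
      (\<forall>a\<in>z. \<forall>b\<in>y. \<forall>i<d. \<bar>a!i - b!i\<bar> \<le> int (length zs) + 1)"
    using step(3) xz(2) by blast
  obtain a0 b0 where "z = {a0,b0}" using edges[OF xz(2)] by blast
  hence a0: "a0 \<in> z" by simp
  have "\<forall>a\<in>x. \<forall>b\<in>y. \<forall>i<d. \<bar>a!i - b!i\<bar> \<le> int (length (z#zs)) + 1"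
  proof (intro ballI allI impI)
    fix a b i assume ab: "a \<in> x" "b \<in> y" "i < d"
    have "\<bar>a!i - a0!i\<bar> \<le> 1" using xz(1) ab(1,3) a0 unfolding near_def by blast
    moreover have "\<bar>a0!i - b!i\<bar> \<le> int (length zs) + 1" using IH a0 ab(2,3) by blast
    ultimately show "\<bar>a!i - b!i\<bar> \<le> int (length (z#zs)) + 1" by simp
  qed
  thus ?case using IH xz by simp
qed

lemma near_chain_of_rtrancl:
  assumes "(fs,fe) \<in> (near_rel d F)\<^sup>*" "fs \<in> F"
    and edges: "\<And>f. f \<in> F \<Longrightarrow> \<exists>a b. f = {a,b} \<and> lattice_adj d a b"
    and "a \<in> fs" "b \<in> fe" "i < d"
  shows "\<exists>cs. distinct cs \<and> cs \<noteq> [] \<and> hd cs = fs \<and> set cs \<subseteq> F \<and> successively (near d) cs \<and>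
             \<bar>a!i - b!i\<bar> \<le> int (length cs)"
proof -
  have "(\<lambda>x y. (x,y) \<in> near_rel d F)\<^sup>*\<^sup>* fs fe" using assms(1) by (simp add: rtranclp_rtrancl_eq)
  then obtain xs where "rtrancl_path (\<lambda>x y. (x,y) \<in> near_rel d F) fs xs fe"
    using rtranclp_eq_rtrancl_path by metis
  then obtain xs' where p: "rtrancl_path (\<lambda>x y. (x,y) \<in> near_rel d F) fs xs' fe"
    and dis: "distinct (fs # xs')"
    using rtrancl_path_distinct by metis
  note pp = near_path_props[OF p assms(2) edges]
  have "\<bar>a!i - b!i\<bar> \<le> int (length xs') + 1" using pp assms(4,5,6) by blast
  thus ?thesis by (intro exI[of _ "fs # xs'"]) (use pp dis assms(2) in auto)
qed

(* Timar's theorem joins fs to a boundary edge on the surface of the cube. *)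
lemma boundary_near_chain:
  assumes d2: "d \<ge> 2" and lc: "length c = d" and r0: "r \<ge> 0"
    and AQ: "A \<subseteq> cube d c r" and BQ: "B0 \<subseteq> cube d c r" and disj: "A \<inter> B0 = {}"
    and closed: "\<And>b v. b \<in> B0 \<Longrightarrow> v \<in> cube d c r \<Longrightarrow> lattice_adj d b v \<Longrightarrow> v \<in> A \<union> B0"
    and connA: "\<And>a1 a2. a1 \<in> A \<Longrightarrow> a2 \<in> A \<Longrightarrow> (a1,a2) \<in> (lattice_rel d \<inter> A \<times> A)\<^sup>*"
    and connB: "\<And>b1 b2. b1 \<in> B0 \<Longrightarrow> b2 \<in> B0 \<Longrightarrow> (b1,b2) \<in> (lattice_rel d \<inter> B0 \<times> B0)\<^sup>*"
    and fs: "fs \<in> edge_boundary d A B0"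
    and aA: "aA \<in> A" "aA \<in> surface d c r" and bB: "bB \<in> B0" "bB \<in> surface d c r"
    and a0: "a0 \<in> fs" "\<forall>i<d. \<bar>a0!i - c!i\<bar> \<le> r1"
  shows "\<exists>cs. distinct cs \<and> cs \<noteq> [] \<and> hd cs = fs \<and> set cs \<subseteq> edge_boundary d A B0 \<and>
             successively (near d) cs \<and> r \<le> int (length cs) + r1"
proof -
  let ?S = "surface d c r"
  have "(aA, bB) \<in> (lattice_rel d \<inter> ?S \<times> ?S)\<^sup>*" by (rule surface_connected[OF d2 lc r0 aA(2) bB(2)])
  moreover have "aA \<notin> B0" using aA disj by blast
  ultimately obtain p q where pq: "p \<notin> B0" "q \<in> B0" "(p,q) \<in> lattice_rel d \<inter> ?S \<times> ?S"
    using rtrancl_first_exit[of aA bB "lattice_rel d \<inter> ?S \<times> ?S" "- B0"] bB(1) by blast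
  have pS: "p \<in> ?S" and adj: "lattice_adj d p q" using pq unfolding lattice_rel_def by auto
  have "p \<in> cube d c r" using pS unfolding surface_def by blast
  hence "p \<in> A" using closed[OF pq(2) _ lattice_adj_sym[OF adj]] pq(1) by blast
  hence fe: "{p,q} \<in> edge_boundary d A B0" unfolding edge_boundary_def using pq(2) adj by blast
  obtain i where i: "i < d" "\<bar>p!i - c!i\<bar> = r" using pS unfolding surface_def by blast
  have t: "(fs, {p,q}) \<in> (near_rel d (edge_boundary d A B0))\<^sup>*"
    by (rule edge_boundary_near_connected[OF AQ[unfolded cube_def] BQ[unfolded cube_def] disj
          closed[unfolded cube_def] connA connB fs fe])
  have edges: "\<And>f. f \<in> edge_boundary d A B0 \<Longrightarrow> \<exists>a b. f = {a,b} \<and> lattice_adj d a b"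
    unfolding edge_boundary_def by blast
  obtain cs where cs: "distinct cs" "cs \<noteq> []" "hd cs = fs" "set cs \<subseteq> edge_boundary d A B0"
      "successively (near d) cs" "\<bar>a0!i - p!i\<bar> \<le> int (length cs)"
    using near_chain_of_rtrancl[OF t fs edges a0(1) _ i(1), of p] by auto
  have "\<bar>a0!i - c!i\<bar> \<le> r1" using a0(2) i(1) by blast
  hence "r \<le> int (length cs) + r1" using cs(6) i(2) by linarith
  thus ?thesis using cs by blast
qed


lemma adj_rel_sym: "(u,v) \<in> adj_rel F \<Longrightarrow> (v,u) \<in> adj_rel F"
  unfolding adj_rel_def by (auto simp: insert_commute)

lemma rtrancl_adj_sym: "(u,v) \<in> (adj_rel F)\<^sup>* \<Longrightarrow> (v,u) \<in> (adj_rel F)\<^sup>*"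
  by (induction rule: rtrancl_induct) (auto intro: converse_rtrancl_into_rtrancl adj_rel_sym)

lemma adj_rel_mono: "F \<subseteq> G \<Longrightarrow> adj_rel F \<subseteq> adj_rel G"
  unfolding adj_rel_def by auto

lemma rtrancl_adj_mono: "F \<subseteq> G \<Longrightarrow> (u,v) \<in> (adj_rel F)\<^sup>* \<Longrightarrow> (u,v) \<in> (adj_rel G)\<^sup>*"
  using rtrancl_mono[OF adj_rel_mono] by (rule subsetD)

lemma adj_rel_subset_lattice_rel:
  assumes "\<And>f. f \<in> F \<Longrightarrow> lattice_edge d f"
  shows "adj_rel F \<subseteq> lattice_rel d"
proof (rule subrelI)
  fix u v assume "(u,v) \<in> adj_rel F"
  hence uv: "{u,v} \<in> F" "u \<noteq> v" unfolding adj_rel_def by auto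
  obtain a b where ab: "{u,v} = {a,b}" "lattice_adj d a b"
    using assms[OF uv(1)] unfolding lattice_edge_def by blast
  have "(u = a \<and> v = b) \<or> (u = b \<and> v = a)" using ab(1) uv(2) by (auto simp: doubleton_eq_iff)
  thus "(u,v) \<in> lattice_rel d" using ab(2) lattice_adj_sym unfolding lattice_rel_def by auto
qed

lemma connects_sym: "connects F T B \<longleftrightarrow> connects F B T"
proof -
  have "connects F B T" if c: "connects F T B" for T B
  proof -
    obtain t b where "t \<in> T" "b \<in> B" "(t,b) \<in> (adj_rel F)\<^sup>*" using c unfolding connects_def by blast
    moreover have "(b,t) \<in> (adj_rel F)\<^sup>*" using calculation(3) by (rule rtrancl_adj_sym)
    ultimately show ?thesis unfolding connects_def by blast
  qed
  thus ?thesis by blast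
qed

lemma rtrancl_restrict_reach:
  assumes "(a,b) \<in> (R \<inter> X \<times> X)\<^sup>*" "\<And>v. (a,v) \<in> R\<^sup>* \<Longrightarrow> v \<in> Y"
  shows "(a,b) \<in> (R \<inter> (X \<inter> Y) \<times> (X \<inter> Y))\<^sup>*"
  using assms(1)
proof (induction rule: rtrancl_induct)
  case (step y z)
  have "(a,y) \<in> R\<^sup>*" using step(1) rtrancl_mono[of "R \<inter> X \<times> X" R] by blast
  hence "(a,z) \<in> R\<^sup>*" "(a,y) \<in> R\<^sup>*" using step(2) by (auto intro: rtrancl_into_rtrancl)
  hence "y \<in> Y" "z \<in> Y" using assms(2) by auto
  thus ?case using step by (blast intro: rtrancl_into_rtrancl)
qed simp

lemma rtrancl_insert_edge:
  assumes "(t,b) \<in> (adj_rel (insert e F))\<^sup>*"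
  shows "(t,b) \<in> (adj_rel F)\<^sup>* \<or> (\<exists>x y. e = {x,y} \<and> (t,x) \<in> (adj_rel F)\<^sup>* \<and> (y,b) \<in> (adj_rel F)\<^sup>*)"
  using assms
proof (induction rule: rtrancl_induct)
  case (step v w)
  have vw: "{v,w} \<in> insert e F" "v \<noteq> w" using step(2) unfolding adj_rel_def by auto
  show ?case
  proof (cases "{v,w} \<in> F")
    case True
    hence "(v,w) \<in> adj_rel F" using vw unfolding adj_rel_def by auto
    thus ?thesis using step(3) by (blast intro: rtrancl_into_rtrancl)
  next
    case False
    hence e: "e = {v,w}" using vw by auto
    from step(3) show ?thesis
    proof
      assume "(t,v) \<in> (adj_rel F)\<^sup>*"
      thus ?thesis using e by blast
    next
      assume "\<exists>x y. e = {x,y} \<and> (t,x) \<in> (adj_rel F)\<^sup>* \<and> (y,v) \<in> (adj_rel F)\<^sup>*"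
      then obtain x y where xy: "e = {x,y}" "(t,x) \<in> (adj_rel F)\<^sup>*" "(y,v) \<in> (adj_rel F)\<^sup>*" by blast
      have "w = x \<or> w = y" using xy(1) e by (auto simp: doubleton_eq_iff)
      thus ?thesis
      proof
        assume "w = x"
        thus ?thesis using xy(2) e by blast
      qed (use xy in blast)
    qed
  qed
qed simp

definition reach :: "'v set set \<Rightarrow> 'v set \<Rightarrow> 'v set" where
  "reach F T = {v. \<exists>t\<in>T. (t,v) \<in> (adj_rel F)\<^sup>*}"

lemma reach_closed: "v \<in> reach F T \<Longrightarrow> (v,w) \<in> (adj_rel F)\<^sup>* \<Longrightarrow> w \<in> reach F T"
  unfolding reach_def by (blast intro: rtrancl_trans)

lemma reach_mono: assumes "F \<subseteq> G" shows "reach F T \<subseteq> reach G T"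
  unfolding reach_def using rtrancl_adj_mono[OF assms] by blast

lemma reach_disjoint: assumes "\<not> connects F T B" shows "reach F T \<inter> reach F B = {}"
proof (rule equals0I)
  fix v assume "v \<in> reach F T \<inter> reach F B"
  then obtain t b where tb: "t \<in> T" "(t,v) \<in> (adj_rel F)\<^sup>*" "b \<in> B" "(b,v) \<in> (adj_rel F)\<^sup>*"
    unfolding reach_def by blast
  have "(t,b) \<in> (adj_rel F)\<^sup>*" using tb(2) rtrancl_adj_sym[OF tb(4)] by (rule rtrancl_trans)
  thus False using assms tb(1,3) unfolding connects_def by blast
qed

lemma cut_edge_endpoints:
  assumes cut: "is_cut E C T B" and eC: "e \<in> C"
  shows "\<exists>x y. e = {x,y} \<and> x \<in> reach (E - C) T \<and> y \<in> reach (E - C) B"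
proof -
  have CE: "C \<subseteq> E" and nc: "\<not> connects (E - C) T B"
    using cut unfolding is_cut_def separates_def by auto
  have "C - {e} \<subset> C" using eC by blast
  hence "\<not> separates E (C - {e}) T B" using cut unfolding is_cut_def by blast
  moreover have "E - (C - {e}) = insert e (E - C)" using eC CE by auto
  ultimately have "connects (insert e (E - C)) T B" using CE unfolding separates_def by auto
  then obtain t b where tb: "t \<in> T" "b \<in> B" "(t,b) \<in> (adj_rel (insert e (E - C)))\<^sup>*"
    unfolding connects_def by blast
  have "(t,b) \<notin> (adj_rel (E - C))\<^sup>*" using nc tb(1,2) unfolding connects_def by blast
  then obtain x y where xy: "e = {x,y}" "(t,x) \<in> (adj_rel (E - C))\<^sup>*" "(y,b) \<in> (adj_rel (E - C))\<^sup>*"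
    using rtrancl_insert_edge[OF tb(3)] by blast
  thus ?thesis unfolding reach_def using tb(1,2) rtrancl_adj_sym[OF xy(3)] by blast
qed

lemma pivotal_sym: "pivotal E T B \<omega> = pivotal E B T \<omega>"
  unfolding pivotal_def using connects_sym by metis

lemma component_connected_from:
  assumes "R \<subseteq> lattice_rel d" "a \<in> S" "S = {v \<in> X. (s,v) \<in> (R \<inter> X \<times> X)\<^sup>*}"
  shows "(s,a) \<in> (lattice_rel d \<inter> S \<times> S)\<^sup>*"
proof -
  have "(s,a) \<in> (R \<inter> X \<times> X)\<^sup>*" using assms(2,3) by blast
  thus ?thesis
  proof (induction rule: rtrancl_induct)
    case (step y z)
    hence "y \<in> S" "z \<in> S" using assms(3) by (auto intro: rtrancl_into_rtrancl)
    moreover have "(y,z) \<in> lattice_rel d" using step(2) assms(1) by blast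
    ultimately show ?case using step(3) by (blast intro: rtrancl_into_rtrancl)
  qed simp
qed

lemma component_connected:
  assumes "R \<subseteq> lattice_rel d" "S = {v \<in> X. (s,v) \<in> (R \<inter> X \<times> X)\<^sup>*}" "a1 \<in> S" "a2 \<in> S"
  shows "(a1,a2) \<in> (lattice_rel d \<inter> S \<times> S)\<^sup>*"
  using lattice_rel_on_sym[OF component_connected_from[OF assms(1,3,2)]]
    component_connected_from[OF assms(1,4,2)] by (rule rtrancl_trans)

lemma component_closed:
  assumes "S = {v \<in> X. (s,v) \<in> (R \<inter> X \<times> X)\<^sup>*}" "a \<in> S" "b \<in> X" "(a,b) \<in> R"
  shows "b \<in> S"
  using assms by (blast intro: rtrancl_into_rtrancl)

lemma component_boundary_near_chain:
  assumes d2: "d \<ge> 2" and lc: "length c = d" and r0: "\<rho> \<ge> 0" and R: "R \<subseteq> lattice_rel d"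
    and A: "A = {v \<in> cube d c \<rho>. (s,v) \<in> (R \<inter> cube d c \<rho> \<times> cube d c \<rho>)\<^sup>*}"
    and B0: "B0 = {v \<in> cube d c \<rho> - A. (t,v) \<in> (lattice_rel d \<inter> (cube d c \<rho> - A) \<times> (cube d c \<rho> - A))\<^sup>*}"
    and s: "s \<in> cube d c \<rho>" and t: "t \<in> cube d c \<rho> - A"
    and aA: "aA \<in> A" "aA \<in> surface d c \<rho>" and bB: "bB \<in> B0" "bB \<in> surface d c \<rho>"
    and fs: "fs \<in> edge_boundary d A B0" and a0: "a0 \<in> fs" "\<forall>i<d. \<bar>a0!i - c!i\<bar> \<le> r1"
  shows "\<exists>cs. distinct cs \<and> cs \<noteq> [] \<and> hd cs = fs \<and> set cs \<subseteq> edge_boundary d A B0 \<and>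
             successively (near d) cs \<and> \<rho> \<le> int (length cs) + r1"
proof (rule boundary_near_chain[OF d2 lc r0 _ _ _ _ _ _ fs aA bB a0])
  show "A \<subseteq> cube d c \<rho>" "B0 \<subseteq> cube d c \<rho>" "A \<inter> B0 = {}" using A B0 by auto
  show "v \<in> A \<union> B0" if "b \<in> B0" "v \<in> cube d c \<rho>" "lattice_adj d b v" for b v
  proof (cases "v \<in> A")
    case False
    hence "v \<in> cube d c \<rho> - A" "b \<in> cube d c \<rho> - A" using that(1,2) B0 by auto
    thus ?thesis using component_closed[OF B0 that(1)] that(3) unfolding lattice_rel_def by blast
  qed simp
  show "(a1,a2) \<in> (lattice_rel d \<inter> A \<times> A)\<^sup>*" if "a1 \<in> A" "a2 \<in> A" for a1 a2
    by (rule component_connected[OF R A that])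
  show "(b1,b2) \<in> (lattice_rel d \<inter> B0 \<times> B0)\<^sup>*" if "b1 \<in> B0" "b2 \<in> B0" for b1 b2
    by (rule component_connected[OF order_refl B0 that])
qed

lemma component_boundary_not_rel:
  assumes "A = {v \<in> X. (s,v) \<in> (R \<inter> X \<times> X)\<^sup>*}" "{a,b} \<in> edge_boundary d A B0" "a \<in> A" "b \<notin> A"
    and "B0 \<subseteq> X"
  shows "(a,b) \<notin> R"
proof -
  have "b \<in> B0" using assms(2-4) unfolding edge_boundary_def by (auto simp: doubleton_eq_iff)
  thus ?thesis using component_closed[OF assms(1,3)] assms(4,5) by blast
qed

definition closed_chain ::
    "nat \<Rightarrow> int list set set \<Rightarrow> int list set \<Rightarrow> int list set \<Rightarrow> int list set set \<Rightarrow> nat \<Rightarrow>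
      int list set list \<Rightarrow> bool" where
  "closed_chain d E T B \<omega> m L \<longleftrightarrow> length L = m \<and> distinct L \<and> set L \<subseteq> E \<and> set L \<inter> \<omega> = {} \<and>
     successively (near d) L \<and> \<not> connects (\<omega> \<union> set L) T B"

lemma closed_chain_sym: "closed_chain d E T B \<omega> m L \<longleftrightarrow> closed_chain d E B T \<omega> m L"
  unfolding closed_chain_def using connects_sym by metis


lemma rtrancl_exit_cube_avoiding:
  assumes "(s,t) \<in> R\<^sup>*" "R \<subseteq> lattice_rel d" "s \<in> cube d c \<rho>" "t \<notin> cube d c \<rho>"
    and avoid: "\<And>v. (s,v) \<in> R\<^sup>* \<Longrightarrow> v \<notin> A"
  obtains a where "(s,a) \<in> (lattice_rel d \<inter> (cube d c \<rho> - A) \<times> (cube d c \<rho> - A))\<^sup>*"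
    "a \<in> surface d c \<rho>" "a \<notin> A"
proof -
  let ?Q = "cube d c \<rho>"
  obtain a where a: "(s,a) \<in> (R \<inter> ?Q \<times> ?Q)\<^sup>*" "a \<in> surface d c \<rho>"
    using rtrancl_exit_cube[OF assms(1-4)] by blast
  have "(s,a) \<in> (R \<inter> (?Q \<inter> - A) \<times> (?Q \<inter> - A))\<^sup>*"
    by (rule rtrancl_restrict_reach[OF a(1)]) (use avoid in blast)
  moreover have "R \<inter> (?Q \<inter> - A) \<times> (?Q \<inter> - A) \<subseteq> lattice_rel d \<inter> (?Q - A) \<times> (?Q - A)"
    using assms(2) by blast
  ultimately have "(s,a) \<in> (lattice_rel d \<inter> (?Q - A) \<times> (?Q - A))\<^sup>*" using rtrancl_mono by blast
  moreover have "(s,a) \<in> R\<^sup>*" using a(1) rtrancl_mono[of "R \<inter> ?Q \<times> ?Q" R] by blast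
  ultimately show ?thesis using that a(2) avoid by blast
qed

section \<open>Closed *-chains near an isolated cut edge\<close>

(* Q = cube d c0 \<rho> is a neighbourhood of the closed cut edge {x,y}, x on the side of T, that lies
   inside the box and meets neither T, B nor any pivotal edge other than {x,y}. *)
locale isolated_cut_edge =
  fixes d :: nat and E :: "int list set set" and T B :: "int list set" and \<omega> C :: "int list set set"
    and x y c0 :: "int list" and \<rho> :: int
  assumes d2: "d \<ge> 2"
    and E_lattice: "\<And>f. f \<in> E \<Longrightarrow> lattice_edge d f"
    and \<omega>E: "\<omega> \<subseteq> E" and CE: "C \<subseteq> E" and C\<omega>: "C \<inter> \<omega> = {}"
    and H: "\<not> connects \<omega> T B" and sepC: "\<not> connects (E - C) T B"
    and xyC: "{x,y} \<in> C" and xS: "x \<in> reach (E - C) T" and yS: "y \<in> reach (E - C) B"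
    and lc: "length c0 = d"
    and QE: "\<And>a b. a \<in> cube d c0 \<rho> \<Longrightarrow> b \<in> cube d c0 \<rho> \<Longrightarrow> lattice_adj d a b \<Longrightarrow> {a,b} \<in> E"
    and TQ: "T \<inter> cube d c0 \<rho> = {}" and BQ: "B \<inter> cube d c0 \<rho> = {}"
    and piv: "\<And>f a. f \<in> pivotal E T B \<omega> \<Longrightarrow> f \<noteq> {x,y} \<Longrightarrow> a \<in> f \<Longrightarrow> a \<notin> cube d c0 \<rho>"
    and xc: "x \<in> cube d c0 1" and yc: "y \<in> cube d c0 1"
    and \<rho>1: "\<rho> \<ge> 1"
begin

lemma swap: "isolated_cut_edge d E B T \<omega> C y x c0 \<rho>"
proof
  show "\<not> connects \<omega> B T" using H connects_sym by metis
  show "\<not> connects (E - C) B T" using sepC connects_sym by metis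
  show "{y,x} \<in> C" using xyC by (simp add: insert_commute)
  show "a \<notin> cube d c0 \<rho>" if "f \<in> pivotal E B T \<omega>" "f \<noteq> {y,x}" "a \<in> f" for f a
    using piv that pivotal_sym by (metis insert_commute)
qed (use d2 E_lattice \<omega>E CE C\<omega> xS yS lc QE TQ BQ xc yc \<rho>1 in auto)

lemma open_clusters_disjoint: "reach (E - C) T \<inter> reach (E - C) B = {}"
  using reach_disjoint[OF sepC] .

lemma clusters_disjoint: "reach \<omega> T \<inter> reach \<omega> B = {}"
  using reach_disjoint[OF H] .

lemma reach_omega_subset: "reach \<omega> S \<subseteq> reach (E - C) S"
  by (rule reach_mono) (use \<omega>E C\<omega> in blast)

lemma y_not_in_T_cluster: "y \<notin> reach \<omega> T"
  using yS reach_omega_subset open_clusters_disjoint by blast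

lemma adj_open_lattice_rel: "adj_rel (E - C) \<subseteq> lattice_rel d"
  by (rule adj_rel_subset_lattice_rel) (use E_lattice in blast)

lemma adj_omega_lattice_rel: "adj_rel \<omega> \<subseteq> lattice_rel d"
  by (rule adj_rel_subset_lattice_rel) (use E_lattice \<omega>E in blast)

lemma lattice_adj_xy: "lattice_adj d x y"
proof -
  have "{x,y} \<in> E" using xyC CE by blast
  then obtain a b where ab: "{x,y} = {a,b}" "lattice_adj d a b"
    using E_lattice unfolding lattice_edge_def by blast
  have "x \<noteq> y" using xS yS open_clusters_disjoint by blast
  hence "(x = a \<and> y = b) \<or> (x = b \<and> y = a)" using ab(1) by (auto simp: doubleton_eq_iff)
  thus ?thesis using ab(2) lattice_adj_sym by auto
qed

lemma x_in_cube: "1 \<le> r \<Longrightarrow> x \<in> cube d c0 r"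
  using cube_mono xc by blast

lemma y_in_cube: "1 \<le> r \<Longrightarrow> y \<in> cube d c0 r"
  using cube_mono yc by blast

lemma not_connects_avoiding:
  assumes "\<forall>f\<in>F. \<forall>a\<in>f. a \<notin> reach \<omega> T"
  shows "\<not> connects (\<omega> \<union> F) T B"
proof
  assume "connects (\<omega> \<union> F) T B"
  then obtain t b where tb: "t \<in> T" "b \<in> B" "(t,b) \<in> (adj_rel (\<omega> \<union> F))\<^sup>*"
    unfolding connects_def by blast
  have "v \<in> reach \<omega> T" if "(t,v) \<in> (adj_rel (\<omega> \<union> F))\<^sup>*" for v
    using that
  proof (induction rule: rtrancl_induct)
    case base thus ?case unfolding reach_def using tb(1) by blast
  next
    case (step v w)
    have vw: "{v,w} \<in> \<omega> \<union> F" "v \<noteq> w" using step(2) unfolding adj_rel_def by auto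
    have "{v,w} \<in> \<omega>" using vw(1) assms step(3) by blast
    hence "(v,w) \<in> (adj_rel \<omega>)\<^sup>*" using vw(2) unfolding adj_rel_def by auto
    thus ?case using reach_closed step(3) by metis
  qed
  hence "b \<in> reach \<omega> T" using tb(3) by blast
  thus False using H tb(2) unfolding reach_def connects_def by blast
qed

lemma pivotal_between_clusters:
  assumes "a \<in> reach \<omega> T" "b \<in> reach \<omega> B" "{a,b} \<in> E"
  shows "{a,b} \<in> pivotal E T B \<omega>"
proof -
  obtain t where t: "t \<in> T" "(t,a) \<in> (adj_rel \<omega>)\<^sup>*" using assms(1) unfolding reach_def by blast
  obtain b' where b': "b' \<in> B" "(b',b) \<in> (adj_rel \<omega>)\<^sup>*" using assms(2) unfolding reach_def by blast
  have "a \<noteq> b" using assms(1,2) clusters_disjoint by blast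
  have sub: "\<omega> \<subseteq> insert {a,b} \<omega>" by blast
  have "(t,a) \<in> (adj_rel (insert {a,b} \<omega>))\<^sup>*" using rtrancl_adj_mono[OF sub t(2)] .
  moreover have "(a,b) \<in> adj_rel (insert {a,b} \<omega>)" using \<open>a \<noteq> b\<close> unfolding adj_rel_def by auto
  moreover have "(b,b') \<in> (adj_rel (insert {a,b} \<omega>))\<^sup>*"
    using rtrancl_adj_mono[OF sub rtrancl_adj_sym[OF b'(2)]] .
  ultimately have "(t,b') \<in> (adj_rel (insert {a,b} \<omega>))\<^sup>*" by (meson rtrancl_into_rtrancl rtrancl_trans)
  hence "connects (insert {a,b} \<omega>) T B" unfolding connects_def using t(1) b'(1) by blast
  thus ?thesis unfolding pivotal_def using assms(3) H by blast
qed

lemma closed_chain_take: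
  assumes "distinct cs" "set cs \<subseteq> E" "set cs \<inter> \<omega> = {}" "successively (near d) cs"
    and "\<forall>f\<in>set cs. \<forall>a\<in>f. a \<notin> reach \<omega> T" "m \<le> length cs"
  shows "closed_chain d E T B \<omega> m (take m cs)"
proof -
  have "successively (near d) (take m cs @ drop m cs)" using assms(4) by simp
  hence "successively (near d) (take m cs)" unfolding successively_append_iff by blast
  moreover have "\<not> connects (\<omega> \<union> set (take m cs)) T B"
    using not_connects_avoiding assms(5) set_take_subset[of m cs] by (meson subsetD)
  ultimately show ?thesis unfolding closed_chain_def
    using assms(1-3,6) set_take_subset[of m cs] by auto
qed

(* An edge of the chain other than {x,y} meeting the cluster of T would be pivotal and have an
   endpoint in the cube. *)
lemma B_cluster_boundary_edge:
  assumes A: "A = {v \<in> cube d c0 \<rho>. (y', v) \<in> (adj_rel \<omega> \<inter> cube d c0 \<rho> \<times> cube d c0 \<rho>)\<^sup>*}"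
    and A_B: "A \<subseteq> reach \<omega> B" and B0: "B0 \<subseteq> cube d c0 \<rho> - A" and fb: "f \<in> edge_boundary d A B0"
  shows "f \<in> E \<and> f \<notin> \<omega> \<and> (f \<noteq> {x,y} \<longrightarrow> (\<forall>a\<in>f. a \<notin> reach \<omega> T))"
proof -
  let ?Q = "cube d c0 \<rho>"
  obtain a b where ab: "f = {a,b}" "a \<in> A" "b \<in> B0" "lattice_adj d a b"
    using fb unfolding edge_boundary_def by blast
  have aQ: "a \<in> ?Q" and bQ: "b \<in> ?Q" and bA: "b \<notin> A" using ab A B0 by auto
  have fE: "f \<in> E" using QE[OF aQ bQ ab(4)] ab(1) by simp
  have "(a,b) \<notin> adj_rel \<omega>"
    by (rule component_boundary_not_rel[OF A _ ab(2) bA]) (use fb ab(1) B0 in auto)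
  hence "f \<notin> \<omega>" using ab lattice_adj_neq unfolding adj_rel_def by auto
  moreover have "\<forall>z\<in>f. z \<notin> reach \<omega> T" if "f \<noteq> {x,y}"
  proof -
    have "a \<notin> reach \<omega> T" using ab(2) A_B clusters_disjoint by blast
    moreover have "b \<notin> reach \<omega> T"
    proof
      assume bT: "b \<in> reach \<omega> T"
      have "a \<in> reach \<omega> B" "{b,a} \<in> E" using ab(1,2) A_B fE by (auto simp: insert_commute)
      hence "{b,a} \<in> pivotal E T B \<omega>" using pivotal_between_clusters[OF bT] by blast
      thus False using piv[of f a] that ab(1) aQ by (simp add: insert_commute)
    qed
    ultimately show ?thesis using ab(1) by blast
  qed
  ultimately show ?thesis using fE by blast
qed

lemma chain_from_B_cluster:
  assumes y'B: "y' \<in> reach \<omega> B" and y'Q: "y' \<in> cube d c0 \<rho>"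
    and A: "A = {v \<in> cube d c0 \<rho>. (y', v) \<in> (adj_rel \<omega> \<inter> cube d c0 \<rho> \<times> cube d c0 \<rho>)\<^sup>*}"
    and B0: "B0 = {v \<in> cube d c0 \<rho> - A.
                   (x, v) \<in> (lattice_rel d \<inter> (cube d c0 \<rho> - A) \<times> (cube d c0 \<rho> - A))\<^sup>*}"
    and fs: "fs \<in> edge_boundary d A B0" and a0: "a0 \<in> fs" "\<forall>i<d. \<bar>a0!i - c0!i\<bar> \<le> r1"
  obtains cs where "distinct cs" "cs \<noteq> []" "hd cs = fs" "set cs \<subseteq> E" "set cs \<inter> \<omega> = {}"
    "successively (near d) cs" "\<forall>f\<in>set cs. f \<noteq> {x,y} \<longrightarrow> (\<forall>a\<in>f. a \<notin> reach \<omega> T)"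
    "\<rho> \<le> int (length cs) + r1"
proof -
  let ?Q = "cube d c0 \<rho>"
  have A_B: "A \<subseteq> reach \<omega> B"
  proof
    fix v assume "v \<in> A"
    hence "(y',v) \<in> (adj_rel \<omega> \<inter> ?Q \<times> ?Q)\<^sup>*" using A by blast
    hence "(y',v) \<in> (adj_rel \<omega>)\<^sup>*" by (rule subsetD[OF rtrancl_mono[OF Int_lower1]])
    thus "v \<in> reach \<omega> B" by (rule reach_closed[OF y'B])
  qed
  have A_open_B: "A \<subseteq> reach (E - C) B" using A_B reach_omega_subset by blast
  have xA: "x \<notin> A" using xS A_open_B open_clusters_disjoint by blast
  obtain aA where aA: "aA \<in> A" "aA \<in> surface d c0 \<rho>"
  proof -
    obtain b where b: "b \<in> B" "(b,y') \<in> (adj_rel \<omega>)\<^sup>*" using y'B unfolding reach_def by blast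
    have "b \<notin> ?Q" using b(1) BQ by blast
    then obtain a where "(y',a) \<in> (adj_rel \<omega> \<inter> ?Q \<times> ?Q)\<^sup>*" "a \<in> surface d c0 \<rho>"
      using rtrancl_exit_cube[OF rtrancl_adj_sym[OF b(2)] adj_omega_lattice_rel y'Q] by blast
    thus ?thesis using that A unfolding surface_def by blast
  qed
  obtain bB where bB: "bB \<in> B0" "bB \<in> surface d c0 \<rho>"
  proof -
    obtain t where t: "t \<in> T" "(t,x) \<in> (adj_rel (E - C))\<^sup>*" using xS unfolding reach_def by blast
    have "t \<notin> ?Q" using t(1) TQ by blast
    moreover have "v \<notin> A" if "(x,v) \<in> (adj_rel (E - C))\<^sup>*" for v
      using reach_closed[OF xS that] A_open_B open_clusters_disjoint by blast
    ultimately obtain a where "(x,a) \<in> (lattice_rel d \<inter> (?Q - A) \<times> (?Q - A))\<^sup>*"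
        "a \<in> surface d c0 \<rho>" "a \<notin> A"
      using rtrancl_exit_cube_avoiding[OF rtrancl_adj_sym[OF t(2)] adj_open_lattice_rel x_in_cube]
        \<rho>1 by blast
    thus ?thesis using that B0 unfolding surface_def by blast
  qed
  have r0: "\<rho> \<ge> 0" using \<rho>1 by simp
  have xQA: "x \<in> ?Q - A" using x_in_cube[OF \<rho>1] xA by blast
  obtain cs where cs: "distinct cs" "cs \<noteq> []" "hd cs = fs" "set cs \<subseteq> edge_boundary d A B0"
      "successively (near d) cs" "\<rho> \<le> int (length cs) + r1"
    using component_boundary_near_chain[OF d2 lc r0 adj_omega_lattice_rel A B0 y'Q xQA aA bB fs a0]
    by blast
  have props: "f \<in> E \<and> f \<notin> \<omega> \<and> (f \<noteq> {x,y} \<longrightarrow> (\<forall>a\<in>f. a \<notin> reach \<omega> T))"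
    if "f \<in> edge_boundary d A B0" for f
    using B_cluster_boundary_edge[OF A A_B _ that] B0 by blast
  show ?thesis by (rule that[OF cs(1-3) _ _ cs(5) _ cs(6)]) (use cs(4) props in blast)+
qed

lemma chain_case_pivotal_ends:
  assumes "x \<in> reach \<omega> T" "y \<in> reach \<omega> B" "int m \<le> \<rho> - 2"
  shows "\<exists>L. closed_chain d E T B \<omega> m L"
proof -
  let ?Q = "cube d c0 \<rho>"
  define A where "A = {v \<in> ?Q. (y, v) \<in> (adj_rel \<omega> \<inter> ?Q \<times> ?Q)\<^sup>*}"
  define B0 where "B0 = {v \<in> ?Q - A. (x, v) \<in> (lattice_rel d \<inter> (?Q - A) \<times> (?Q - A))\<^sup>*}"
  have yA: "y \<in> A" unfolding A_def using y_in_cube[OF \<rho>1] by blast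
  have "x \<notin> A"
  proof
    assume "x \<in> A"
    hence "(y,x) \<in> (adj_rel \<omega>)\<^sup>*" unfolding A_def using rtrancl_mono[OF Int_lower1] by blast
    hence "x \<in> reach \<omega> B" by (rule reach_closed[OF assms(2)])
    thus False using assms(1) clusters_disjoint by blast
  qed
  hence xB0: "x \<in> B0" unfolding B0_def using x_in_cube[OF \<rho>1] by blast
  have "{y,x} \<in> edge_boundary d A B0"
    unfolding edge_boundary_def using yA xB0 lattice_adj_sym[OF lattice_adj_xy] by blast
  hence fs: "{x,y} \<in> edge_boundary d A B0" by (simp add: insert_commute)
  have a0: "x \<in> {x,y}" "\<forall>i<d. \<bar>x!i - c0!i\<bar> \<le> 1" using xc by (auto simp: cube_iff)
  obtain cs where cs: "distinct cs" "cs \<noteq> []" "hd cs = {x,y}" "set cs \<subseteq> E" "set cs \<inter> \<omega> = {}"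
     "successively (near d) cs" "\<forall>f\<in>set cs. f \<noteq> {x,y} \<longrightarrow> (\<forall>a\<in>f. a \<notin> reach \<omega> T)"
     "\<rho> \<le> int (length cs) + 1"
    by (rule chain_from_B_cluster[OF assms(2) y_in_cube[OF \<rho>1] A_def B0_def fs a0])
  \<comment> \<open>Drop the first edge {x,y}: its endpoint x lies in the cluster of T.\<close>
  obtain rest where rest: "cs = {x,y} # rest" using cs(2,3) by (cases cs) auto
  have "successively (near d) rest" using cs(6) unfolding rest by (cases rest) auto
  moreover have "\<forall>f\<in>set rest. \<forall>a\<in>f. a \<notin> reach \<omega> T" using cs(1,7) rest by auto
  moreover have "m \<le> length rest" using cs(8) assms(3) rest by simp
  ultimately have "closed_chain d E T B \<omega> m (take m rest)"
    using closed_chain_take[of rest] cs(1,4,5) rest by auto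
  thus ?thesis by blast
qed

lemma chain_case_x_not_in_T_cluster:
  assumes xT: "x \<notin> reach \<omega> T" and y'B: "y' \<in> reach \<omega> B" and y'Q': "y' \<in> cube d c0 \<rho>'"
    and r1: "1 \<le> \<rho>'" and r2: "\<rho>' \<le> \<rho>" and m: "int m \<le> \<rho> - \<rho>'"
  shows "\<exists>L. closed_chain d E T B \<omega> m L"
proof -
  let ?Q = "cube d c0 \<rho>"
  let ?Q' = "cube d c0 \<rho>'"
  have Q'Q: "?Q' \<subseteq> ?Q" by (rule cube_mono[OF r2])
  have y'Q: "y' \<in> ?Q" using y'Q' Q'Q by blast
  define A where "A = {v \<in> ?Q. (y', v) \<in> (adj_rel \<omega> \<inter> ?Q \<times> ?Q)\<^sup>*}"
  define B0 where "B0 = {v \<in> ?Q - A. (x, v) \<in> (lattice_rel d \<inter> (?Q - A) \<times> (?Q - A))\<^sup>*}"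
  have y'A: "y' \<in> A" unfolding A_def using y'Q by blast
  have "x \<notin> A"
  proof
    assume "x \<in> A"
    hence "(y',x) \<in> (adj_rel \<omega>)\<^sup>*" unfolding A_def using rtrancl_mono[OF Int_lower1] by blast
    hence "x \<in> reach (E - C) B" using reach_closed[OF y'B] reach_omega_subset by blast
    thus False using xS open_clusters_disjoint by blast
  qed
  hence xB0: "x \<in> B0" unfolding B0_def using x_in_cube[OF \<rho>1] by blast
  \<comment> \<open>The chain starts inside the smaller cube, so it is still at least \<rho> - \<rho>' long.\<close>
  have "(y',x) \<in> (lattice_rel d \<inter> ?Q' \<times> ?Q')\<^sup>*" using cube_connected[OF y'Q' x_in_cube[OF r1]] .
  moreover have "y' \<notin> B0" "x \<in> B0" using y'A xB0 unfolding B0_def by auto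
  ultimately obtain p q where pq: "p \<notin> B0" "q \<in> B0" "(p,q) \<in> lattice_rel d \<inter> ?Q' \<times> ?Q'"
    using rtrancl_first_exit[of y' x "lattice_rel d \<inter> ?Q' \<times> ?Q'" "- B0"] by blast
  have pQ': "p \<in> ?Q'" and adj: "lattice_adj d p q" using pq unfolding lattice_rel_def by auto
  have pA: "p \<in> A"
  proof (rule ccontr)
    assume "p \<notin> A"
    moreover have "p \<in> ?Q" using pQ' Q'Q by blast
    ultimately have "p \<in> B0" using component_closed[OF B0_def pq(2)] pq(2) lattice_adj_sym[OF adj]
      unfolding B0_def lattice_rel_def by blast
    thus False using pq(1) by blast
  qed
  have fs: "{p,q} \<in> edge_boundary d A B0" unfolding edge_boundary_def using pA pq(2) adj by blast
  have a0: "p \<in> {p,q}" "\<forall>i<d. \<bar>p!i - c0!i\<bar> \<le> \<rho>'" using pQ' by (auto simp: cube_iff)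
  obtain cs where cs: "distinct cs" "cs \<noteq> []" "hd cs = {p,q}" "set cs \<subseteq> E" "set cs \<inter> \<omega> = {}"
     "successively (near d) cs" "\<forall>f\<in>set cs. f \<noteq> {x,y} \<longrightarrow> (\<forall>a\<in>f. a \<notin> reach \<omega> T)"
     "\<rho> \<le> int (length cs) + \<rho>'"
    by (rule chain_from_B_cluster[OF y'B y'Q A_def B0_def fs a0])
  have "\<forall>f\<in>set cs. \<forall>a\<in>f. a \<notin> reach \<omega> T" using cs(7) xT y_not_in_T_cluster by auto
  hence "closed_chain d E T B \<omega> m (take m cs)"
    using closed_chain_take[OF cs(1,4-6)] cs(8) m by simp
  thus ?thesis by blast
qed

(* Here the chain runs along the boundary of the open cluster of x, so all its edges lie in the
   closed cut C. *)
lemma x_cluster_boundary_edge_in_cut: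
  assumes A: "A = {v \<in> cube d c0 \<rho>'. (x, v) \<in> (adj_rel (E - C) \<inter> cube d c0 \<rho>' \<times> cube d c0 \<rho>')\<^sup>*}"
    and B0: "B0 \<subseteq> cube d c0 \<rho>' - A" and r2: "\<rho>' \<le> \<rho>" and fb: "f \<in> edge_boundary d A B0"
  shows "f \<in> C"
proof -
  obtain a b where ab: "f = {a,b}" "a \<in> A" "b \<in> B0" "lattice_adj d a b"
    using fb unfolding edge_boundary_def by blast
  have "a \<in> cube d c0 \<rho>" "b \<in> cube d c0 \<rho>" and bA: "b \<notin> A"
    using ab A B0 cube_mono[OF r2] by auto
  hence fE: "f \<in> E" using QE ab(1,4) by blast
  have "(a,b) \<notin> adj_rel (E - C)"
    by (rule component_boundary_not_rel[OF A _ ab(2) bA]) (use fb ab(1) B0 in auto)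
  thus ?thesis using ab fE lattice_adj_neq unfolding adj_rel_def by auto
qed

lemma chain_case_neutral_cube:
  assumes neutral: "cube d c0 \<rho>' \<inter> reach \<omega> T = {}" and r1: "1 \<le> \<rho>'" and r2: "\<rho>' \<le> \<rho>"
    and m: "int m \<le> \<rho>' - 1"
  shows "\<exists>L. closed_chain d E T B \<omega> m L"
proof -
  let ?Q' = "cube d c0 \<rho>'"
  have Q'Q: "?Q' \<subseteq> cube d c0 \<rho>" by (rule cube_mono[OF r2])
  define A where "A = {v \<in> ?Q'. (x, v) \<in> (adj_rel (E - C) \<inter> ?Q' \<times> ?Q')\<^sup>*}"
  define B0 where "B0 = {v \<in> ?Q' - A. (y, v) \<in> (lattice_rel d \<inter> (?Q' - A) \<times> (?Q' - A))\<^sup>*}"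
  have A_T: "A \<subseteq> reach (E - C) T"
  proof
    fix v assume "v \<in> A"
    hence "(x,v) \<in> (adj_rel (E - C) \<inter> ?Q' \<times> ?Q')\<^sup>*" unfolding A_def by blast
    hence "(x,v) \<in> (adj_rel (E - C))\<^sup>*" by (rule subsetD[OF rtrancl_mono[OF Int_lower1]])
    thus "v \<in> reach (E - C) T" by (rule reach_closed[OF xS])
  qed
  have xA: "x \<in> A" unfolding A_def using x_in_cube[OF r1] by blast
  have yA: "y \<notin> A" using yS A_T open_clusters_disjoint by blast
  have yB0: "y \<in> B0" unfolding B0_def using y_in_cube[OF r1] yA by blast
  obtain aA where aA: "aA \<in> A" "aA \<in> surface d c0 \<rho>'"
  proof -
    obtain t where t: "t \<in> T" "(t,x) \<in> (adj_rel (E - C))\<^sup>*" using xS unfolding reach_def by blast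
    have "t \<notin> ?Q'" using t(1) TQ Q'Q by blast
    then obtain a where "(x,a) \<in> (adj_rel (E - C) \<inter> ?Q' \<times> ?Q')\<^sup>*" "a \<in> surface d c0 \<rho>'"
      using rtrancl_exit_cube[OF rtrancl_adj_sym[OF t(2)] adj_open_lattice_rel x_in_cube[OF r1]] by blast
    thus ?thesis using that unfolding A_def surface_def by blast
  qed
  obtain bB where bB: "bB \<in> B0" "bB \<in> surface d c0 \<rho>'"
  proof -
    obtain b where b: "b \<in> B" "(b,y) \<in> (adj_rel (E - C))\<^sup>*" using yS unfolding reach_def by blast
    have "b \<notin> ?Q'" using b(1) BQ Q'Q by blast
    moreover have "v \<notin> A" if "(y,v) \<in> (adj_rel (E - C))\<^sup>*" for v
      using reach_closed[OF yS that] A_T open_clusters_disjoint by blast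
    ultimately obtain a where "(y,a) \<in> (lattice_rel d \<inter> (?Q' - A) \<times> (?Q' - A))\<^sup>*"
        "a \<in> surface d c0 \<rho>'" "a \<notin> A"
      using rtrancl_exit_cube_avoiding[OF rtrancl_adj_sym[OF b(2)] adj_open_lattice_rel y_in_cube[OF r1]]
      by blast
    thus ?thesis using that unfolding B0_def surface_def by blast
  qed
  have r0: "\<rho>' \<ge> 0" using r1 by simp
  have fs: "{x,y} \<in> edge_boundary d A B0" unfolding edge_boundary_def using xA yB0 lattice_adj_xy by blast
  have a0: "x \<in> {x,y}" "\<forall>i<d. \<bar>x!i - c0!i\<bar> \<le> 1" using xc by (auto simp: cube_iff)
  have "y \<in> ?Q' - A" using yA y_in_cube[OF r1] by blast
  then obtain cs where cs: "distinct cs" "set cs \<subseteq> edge_boundary d A B0"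
      "successively (near d) cs" "\<rho>' \<le> int (length cs) + 1"
    using component_boundary_near_chain[OF d2 lc r0 adj_open_lattice_rel A_def B0_def
        x_in_cube[OF r1] _ aA bB fs a0] by blast
  have props: "f \<in> E \<and> f \<notin> \<omega> \<and> (\<forall>z\<in>f. z \<notin> reach \<omega> T)" if fb: "f \<in> edge_boundary d A B0" for f
  proof -
    have "f \<in> C" by (rule x_cluster_boundary_edge_in_cut[OF A_def _ r2 fb]) (auto simp: B0_def)
    moreover have "f \<subseteq> ?Q'" using fb unfolding edge_boundary_def A_def B0_def by blast
    ultimately show ?thesis using CE C\<omega> neutral by blast
  qed
  have "closed_chain d E T B \<omega> m (take m cs)"
    by (rule closed_chain_take[OF cs(1)]) (use cs(2-4) props m in auto)
  thus ?thesis by blast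
qed

lemma closed_chain_exists:
  assumes r1: "1 \<le> \<rho>'" and r2: "2 * \<rho>' \<le> \<rho>" and m: "int m \<le> \<rho>' - 1"
  shows "\<exists>L. closed_chain d E T B \<omega> m L"
proof -
  let ?AT = "reach \<omega> T" and ?AB = "reach \<omega> B" and ?Q' = "cube d c0 \<rho>'"
  have r2': "\<rho>' \<le> \<rho>" and m3: "int m \<le> \<rho> - \<rho>'" using r1 r2 m by simp_all
  consider (pivotal) "x \<in> ?AT" "y \<in> ?AB"
    | (x_out) "x \<notin> ?AT" "\<exists>y'. y' \<in> ?AB \<and> y' \<in> ?Q'"
    | (y_out) "y \<notin> ?AB" "\<exists>x'. x' \<in> ?AT \<and> x' \<in> ?Q'"
    | (neutral) "?Q' \<inter> ?AT = {}"
    using y_in_cube[OF r1] by blast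
  thus ?thesis
  proof cases
    case pivotal
    thus ?thesis using chain_case_pivotal_ends m r2 by simp
  next
    case x_out
    thus ?thesis using chain_case_x_not_in_T_cluster[OF _ _ _ r1 r2' m3] by blast
  next
    case y_out
    hence "\<exists>L. closed_chain d E B T \<omega> m L"
      using isolated_cut_edge.chain_case_x_not_in_T_cluster[OF swap _ _ _ r1 r2' m3] by blast
    thus ?thesis using closed_chain_sym by blast
  next
    case neutral
    thus ?thesis using chain_case_neutral_cube[OF _ r1 r2' m] by blast
  qed
qed

end


section \<open>Random-cluster weights\<close>

lemma rtrancl_through_pair:
  assumes sub: "S' \<subseteq> S \<union> {u,w} \<times> {u,w}" and st: "(s,t) \<in> S'\<^sup>*"
  shows "(s,t) \<in> S\<^sup>* \<or> (((s,u) \<in> S\<^sup>* \<or> (s,w) \<in> S\<^sup>*) \<and> ((u,t) \<in> S\<^sup>* \<or> (w,t) \<in> S\<^sup>*))"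
  using st
proof (induction rule: rtrancl_induct)
  case base thus ?case by simp
next
  case (step t t')
  show ?case
  proof (cases "(t,t') \<in> S")
    case True
    from step(3) show ?thesis
    proof
      assume "(s,t) \<in> S\<^sup>*" thus ?thesis using True by (blast intro: rtrancl_into_rtrancl)
    next
      assume h: "((s,u) \<in> S\<^sup>* \<or> (s,w) \<in> S\<^sup>*) \<and> ((u,t) \<in> S\<^sup>* \<or> (w,t) \<in> S\<^sup>*)"
      have "(u,t') \<in> S\<^sup>* \<or> (w,t') \<in> S\<^sup>*" using h True by (blast intro: rtrancl_into_rtrancl)
      thus ?thesis using h by blast
    qed
  next
    case False
    hence tt: "t \<in> {u,w}" "t' \<in> {u,w}" using step(2) sub by auto
    have r: "(u,t') \<in> S\<^sup>* \<or> (w,t') \<in> S\<^sup>*" using tt(2) by auto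
    from step(3) have "(s,u) \<in> S\<^sup>* \<or> (s,w) \<in> S\<^sup>*"
    proof
      assume "(s,t) \<in> S\<^sup>*" thus ?thesis using tt(1) by auto
    qed blast
    thus ?thesis using r by blast
  qed
qed

lemma card_quotient_refine_le:
  assumes eqR: "equiv A R" and eqR': "equiv A R'" and sub: "R \<subseteq> R'" and u: "u \<in> A"
    and key: "\<And>s t. s \<in> A \<Longrightarrow> t \<in> A \<Longrightarrow> (s,t) \<in> R' \<Longrightarrow>
        (s,t) \<in> R \<or> (((s,u) \<in> R \<or> (s,w) \<in> R) \<and> ((t,u) \<in> R \<or> (t,w) \<in> R))"
  shows "card (A//R) \<le> card (A//R') + 1"
proof (cases "finite (A//R)")
  case False thus ?thesis by simp
next
  case True
  let ?\<phi> = "\<lambda>X. R'``X"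
  let ?c = "R``{u}"
  have img: "?\<phi> ` (A//R) = A//R'" by (rule refines_equiv_image_eq[OF sub eqR eqR'])
  have inj: "inj_on ?\<phi> (A//R - {?c})"
  proof (rule inj_onI)
    fix X Y assume X: "X \<in> A//R - {?c}" and Y: "Y \<in> A//R - {?c}" and eq: "R'``X = R'``Y"
    have "X \<in> A//R" using X by blast
    then obtain s where s: "X = R``{s}" "s \<in> A" by (rule quotientE)
    have "Y \<in> A//R" using Y by blast
    then obtain t where t: "Y = R``{t}" "t \<in> A" by (rule quotientE)
    have "R'``{s} = R'``{t}" using eq s t refines_equiv_class_eq2[OF sub eqR eqR'] by simp
    hence st: "(s,t) \<in> R'" using eq_equiv_class_iff[OF eqR' s(2) t(2)] by simp
    have sc: "(s,u) \<notin> R" using X s eq_equiv_class_iff[OF eqR s(2) u] by auto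
    have tc: "(t,u) \<notin> R" using Y t eq_equiv_class_iff[OF eqR t(2) u] by auto
    have "(s,t) \<in> R"
    proof -
      from key[OF s(2) t(2) st] sc tc have "(s,t) \<in> R \<or> ((s,w) \<in> R \<and> (t,w) \<in> R)" by blast
      thus ?thesis
      proof
        assume "(s,w) \<in> R \<and> (t,w) \<in> R"
        moreover have "sym R" "trans R" using eqR unfolding equiv_def by auto
        ultimately show ?thesis by (meson symD transD)
      qed
    qed
    thus "X = Y" using s t eq_equiv_class_iff[OF eqR s(2) t(2)] by simp
  qed
  have "finite (?\<phi> ` (A//R))" using True by (rule finite_imageI)
  hence fin': "finite (A//R')" using img by simp
  have "card (A//R - {?c}) = card (?\<phi> ` (A//R - {?c}))" using card_image[OF inj] by simp
  also have "\<dots> \<le> card (A//R')" using img fin' by (intro card_mono) auto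
  finally have "card (A//R - {?c}) \<le> card (A//R')" .
  moreover have "card (A//R) \<le> card (A//R - {?c}) + 1"
  proof (cases "?c \<in> A//R")
    case True
    have "card (A//R - {?c}) = card (A//R) - 1" using card_Diff_singleton[OF True] .
    moreover have "card (A//R) \<ge> 1" using True \<open>finite (A//R)\<close> by (metis One_nat_def Suc_leI card_gt_0_iff empty_iff)
    ultimately show ?thesis by simp
  next
    case False thus ?thesis by simp
  qed
  ultimately show ?thesis by simp
qed

lemma equiv_rtrancl_Int:
  assumes "sym S" shows "equiv A (S\<^sup>* \<inter> A \<times> A)"
proof (rule equivI)
  show "S\<^sup>* \<inter> A \<times> A \<subseteq> A \<times> A" by blast
  show "refl_on A (S\<^sup>* \<inter> A \<times> A)" unfolding refl_on_def by blast
  have "sym (A \<times> A)" unfolding sym_def by blast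
  thus "sym (S\<^sup>* \<inter> A \<times> A)" using sym_Int[OF sym_rtrancl[OF assms]] by blast
  have "trans (A \<times> A)" unfolding trans_def by blast
  thus "trans (S\<^sup>* \<inter> A \<times> A)" using trans_Int[OF trans_rtrancl] by blast
qed

lemma kTB_insert:
  fixes V :: "'a set"
  assumes a: "a \<in> V" and b: "b \<in> V"
  shows "kTB V T B \<omega> \<le> kTB V T B (insert {a,b} \<omega>) + 1"
proof -
  define V' :: "('a + bool) set" where "V' = Inl ` V \<union> {Inr True, Inr False}"
  define R :: "('a + bool) rel" where "R = {(Inl x, Inl y) | x y. {x, y} \<in> \<omega>} \<union> {(Inr True, Inl x) | x. x \<in> T}
           \<union> {(Inr False, Inl x) | x. x \<in> B}"
  define R2 :: "('a + bool) rel" where "R2 = {(Inl x, Inl y) | x y. {x, y} \<in> insert {a,b} \<omega>} \<union> {(Inr True, Inl x) | x. x \<in> T}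
           \<union> {(Inr False, Inl x) | x. x \<in> B}"
  define S where "S = R \<union> R\<inverse>"
  define S2 where "S2 = R2 \<union> R2\<inverse>"
  have k1: "kTB V T B \<omega> = card (V' // (S\<^sup>* \<inter> V' \<times> V'))"
    unfolding kTB_def V'_def R_def S_def Let_def by simp
  have k2: "kTB V T B (insert {a,b} \<omega>) = card (V' // (S2\<^sup>* \<inter> V' \<times> V'))"
    unfolding kTB_def V'_def R2_def S2_def Let_def by simp
  let ?u = "Inl a :: 'a + bool" and ?w = "Inl b :: 'a + bool"
  have RR2: "R \<subseteq> R2" unfolding R_def R2_def by blast
  have R2R: "R2 \<subseteq> R \<union> {?u,?w} \<times> {?u,?w}"
  proof
    fix p assume "p \<in> R2"
    show "p \<in> R \<union> {?u,?w} \<times> {?u,?w}"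
    proof (cases "p \<in> R")
      case False
      then obtain x y where "p = (Inl x, Inl y)" "{x,y} = {a,b}" using \<open>p \<in> R2\<close> unfolding R_def R2_def by blast
      thus ?thesis by (auto simp: doubleton_eq_iff)
    qed simp
  qed
  have SS2: "S \<subseteq> S2" unfolding S_def S2_def using RR2 by blast
  have S2S: "S2 \<subseteq> S \<union> {?u,?w} \<times> {?u,?w}" unfolding S_def S2_def using R2R by blast
  have eq1: "equiv V' (S\<^sup>* \<inter> V' \<times> V')" unfolding S_def by (rule equiv_rtrancl_Int[OF sym_Un_converse])
  have eq2: "equiv V' (S2\<^sup>* \<inter> V' \<times> V')" unfolding S2_def by (rule equiv_rtrancl_Int[OF sym_Un_converse])
  have symS: "sym (S\<^sup>*)" unfolding S_def by (rule sym_rtrancl[OF sym_Un_converse])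
  have sub: "S\<^sup>* \<inter> V' \<times> V' \<subseteq> S2\<^sup>* \<inter> V' \<times> V'" using rtrancl_mono[OF SS2] by blast
  have uV: "?u \<in> V'" and wV: "?w \<in> V'" unfolding V'_def using a b by auto
  have key: "(s,t) \<in> S\<^sup>* \<inter> V' \<times> V' \<or> (((s,?u) \<in> S\<^sup>* \<inter> V' \<times> V' \<or> (s,?w) \<in> S\<^sup>* \<inter> V' \<times> V') \<and>
       ((t,?u) \<in> S\<^sup>* \<inter> V' \<times> V' \<or> (t,?w) \<in> S\<^sup>* \<inter> V' \<times> V'))"
    if st: "s \<in> V'" "t \<in> V'" "(s,t) \<in> S2\<^sup>* \<inter> V' \<times> V'" for s t
  proof -
    have "(s,t) \<in> S2\<^sup>*" using st(3) by blast
    from rtrancl_through_pair[OF S2S this]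
    have h: "(s,t) \<in> S\<^sup>* \<or> (((s,?u) \<in> S\<^sup>* \<or> (s,?w) \<in> S\<^sup>*) \<and> ((?u,t) \<in> S\<^sup>* \<or> (?w,t) \<in> S\<^sup>*))" .
    have "(?u,t) \<in> S\<^sup>* \<Longrightarrow> (t,?u) \<in> S\<^sup>*" using symS by (rule symD)
    moreover have "(?w,t) \<in> S\<^sup>* \<Longrightarrow> (t,?w) \<in> S\<^sup>*" using symS by (rule symD)
    ultimately show ?thesis using h st(1,2) uV wV by blast
  qed
  have "card (V' // (S\<^sup>* \<inter> V' \<times> V')) \<le> card (V' // (S2\<^sup>* \<inter> V' \<times> V')) + 1"
    by (rule card_quotient_refine_le[OF eq1 eq2 sub uV key])
  thus ?thesis using k1 k2 by simp
qed

lemma kTB_union: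
  assumes "finite F" "\<forall>f\<in>F. \<exists>a b. f = {a,b} \<and> a \<in> V \<and> b \<in> V"
  shows "kTB V T B \<omega> \<le> kTB V T B (\<omega> \<union> F) + card F"
  using assms
proof (induction F rule: finite_induct)
  case empty thus ?case by simp
next
  case (insert f F)
  obtain a b where ab: "f = {a,b}" "a \<in> V" "b \<in> V" using insert(4) by blast
  have "kTB V T B \<omega> \<le> kTB V T B (\<omega> \<union> F) + card F" using insert by blast
  also have "kTB V T B (\<omega> \<union> F) \<le> kTB V T B (insert f (\<omega> \<union> F)) + 1"
    unfolding ab(1) by (rule kTB_insert[OF ab(2,3)])
  finally show ?case using insert(1,2) by simp
qed

lemma rc_weight_nonneg:
  assumes "0 \<le> p" "p \<le> 1" "q \<ge> 0" shows "rc_weight V E T B p q \<omega> \<ge> 0"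
  unfolding rc_weight_def using assms by simp

lemma rc_weight_le_open:
  assumes p0: "0 < p" and p1: "p \<le> 1" and q1: "q \<ge> 1" and fE: "finite E" and wE: "\<omega> \<subseteq> E"
    and FE: "F \<subseteq> E" and Fw: "F \<inter> \<omega> = {}" and FV: "\<forall>f\<in>F. \<exists>a b. f = {a,b} \<and> a \<in> V \<and> b \<in> V"
  shows "rc_weight V E T B p q \<omega> \<le> (q * (1 - p) / p) ^ card F * rc_weight V E T B p q (\<omega> \<union> F)"
proof -
  have fF: "finite F" using FE fE finite_subset by blast
  have fw: "finite \<omega>" using wE fE finite_subset by blast
  have cU: "card (\<omega> \<union> F) = card \<omega> + card F" using card_Un_disjoint[OF fw fF] Fw by auto
  have le: "card \<omega> + card F \<le> card E" using card_mono[OF fE, of "\<omega> \<union> F"] wE FE cU by auto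
  define k where "k = card \<omega>"
  define m where "m = card F"
  define n where "n = card E"
  define K1 where "K1 = kTB V T B \<omega>"
  define K2 where "K2 = kTB V T B (\<omega> \<union> F)"
  have K: "K1 \<le> K2 + m" unfolding K1_def K2_def m_def by (rule kTB_union[OF fF FV])
  have nk: "n - k = (n - k - m) + m" using le unfolding n_def k_def m_def by simp
  have w1: "rc_weight V E T B p q \<omega> = p ^ k * (1 - p) ^ (n - k) * q ^ K1"
    unfolding rc_weight_def k_def n_def K1_def by simp
  have w2: "rc_weight V E T B p q (\<omega> \<union> F) = p ^ (k + m) * (1 - p) ^ (n - k - m) * q ^ K2"
    unfolding rc_weight_def k_def n_def K2_def m_def cU by (simp add: diff_diff_add)
  have pp: "1 - p \<ge> 0" using p1 by simp
  have e1: "(q * (1 - p) / p) ^ m = q ^ m * (1 - p) ^ m / p ^ m" by (simp add: power_divide power_mult_distrib)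
  have pm: "p ^ m \<noteq> 0" using p0 by simp
  have "(q * (1 - p) / p) ^ m * (p ^ (k + m) * (1 - p) ^ (n - k - m) * q ^ K2)
        = (q ^ m * (1 - p) ^ m / p ^ m) * (p ^ k * p ^ m * (1 - p) ^ (n - k - m) * q ^ K2)"
    unfolding e1 by (simp add: power_add)
  also have "\<dots> = p ^ k * ((1 - p) ^ (n - k - m) * (1 - p) ^ m) * (q ^ K2 * q ^ m)"
    using pm by (simp add: field_simps)
  also have "\<dots> = p ^ k * ((1 - p) ^ (n - k - m) * (1 - p) ^ m) * q ^ (K2 + m)"
    by (simp add: power_add)
  also have "(1 - p) ^ (n - k - m) * (1 - p) ^ m = (1 - p) ^ (n - k)"
    by (subst nk) (simp add: power_add)
  finally have eq: "(q * (1 - p) / p) ^ m * (p ^ (k + m) * (1 - p) ^ (n - k - m) * q ^ K2)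
        = p ^ k * (1 - p) ^ (n - k) * q ^ (K2 + m)" by simp
  have "q ^ K1 \<le> q ^ (K2 + m)" by (rule power_increasing[OF K q1])
  hence "p ^ k * (1 - p) ^ (n - k) * q ^ K1 \<le> p ^ k * (1 - p) ^ (n - k) * q ^ (K2 + m)"
    using p0 pp by (intro mult_left_mono) auto
  thus ?thesis using w1 w2 eq unfolding m_def by simp
qed

lemma sum_le_by_cover:
  fixes w :: "'e set \<Rightarrow> real" and Fs :: "'l \<Rightarrow> 'e set"
  assumes fE: "finite E" and fL: "finite Ls" and w0: "\<And>\<omega>. w \<omega> \<ge> 0" and K0: "K \<ge> 0"
    and cover: "\<And>\<omega>. \<omega> \<subseteq> E \<Longrightarrow> A \<omega> \<Longrightarrow> H \<omega> \<Longrightarrow> \<exists>L\<in>Ls. Fs L \<inter> \<omega> = {} \<and> H (\<omega> \<union> Fs L)"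
    and FsE: "\<And>L. L \<in> Ls \<Longrightarrow> Fs L \<subseteq> E"
    and winj: "\<And>L \<omega>. L \<in> Ls \<Longrightarrow> \<omega> \<subseteq> E \<Longrightarrow> Fs L \<inter> \<omega> = {} \<Longrightarrow> w \<omega> \<le> K * w (\<omega> \<union> Fs L)"
  shows "(\<Sum>\<omega>\<in>{\<omega>. \<omega> \<subseteq> E \<and> A \<omega> \<and> H \<omega>}. w \<omega>) \<le> real (card Ls) * K * (\<Sum>\<omega>\<in>{\<omega>. \<omega> \<subseteq> E \<and> H \<omega>}. w \<omega>)"
proof -
  let ?P = "\<lambda>L \<omega>. Fs L \<inter> \<omega> = {} \<and> H (\<omega> \<union> Fs L)"
  let ?SAH = "{\<omega>. \<omega> \<subseteq> E \<and> A \<omega> \<and> H \<omega>}"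
  let ?SH = "{\<omega>. \<omega> \<subseteq> E \<and> H \<omega>}"
  have fP: "finite (Pow E)" using fE by simp
  have fSAH: "finite ?SAH" using fP by (rule finite_subset[rotated]) auto
  have fSH: "finite ?SH" using fP by (rule finite_subset[rotated]) auto
  have step1: "w \<omega> \<le> (\<Sum>L\<in>Ls. if ?P L \<omega> then w \<omega> else 0)" if "\<omega> \<in> ?SAH" for \<omega>
  proof -
    have "\<omega> \<subseteq> E" "A \<omega>" "H \<omega>" using that by auto
    then obtain L where L: "L \<in> Ls" "?P L \<omega>" using cover by blast
    have "w \<omega> = (if ?P L \<omega> then w \<omega> else 0)" using L by simp
    also have "\<dots> \<le> (\<Sum>L\<in>Ls. if ?P L \<omega> then w \<omega> else 0)"
    proof (rule member_le_sum[OF L(1)])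
      fix x show "0 \<le> (if ?P x \<omega> then w \<omega> else 0)" using w0[of \<omega>] by simp
    qed (rule fL)
    finally show ?thesis .
  qed
  have "(\<Sum>\<omega>\<in>?SAH. w \<omega>) \<le> (\<Sum>\<omega>\<in>?SAH. \<Sum>L\<in>Ls. if ?P L \<omega> then w \<omega> else 0)"
    by (rule sum_mono) (rule step1)
  also have "\<dots> \<le> (\<Sum>\<omega>\<in>Pow E. \<Sum>L\<in>Ls. if ?P L \<omega> then w \<omega> else 0)"
  proof (rule sum_mono2[OF fP])
    show "?SAH \<subseteq> Pow E" by blast
    fix b show "0 \<le> (\<Sum>L\<in>Ls. if ?P L b then w b else 0)"
      by (rule sum_nonneg) (simp add: w0)
  qed
  also have "\<dots> = (\<Sum>L\<in>Ls. \<Sum>\<omega>\<in>Pow E. if ?P L \<omega> then w \<omega> else 0)" by (rule sum.swap)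
  also have "\<dots> \<le> (\<Sum>L\<in>Ls. K * (\<Sum>\<omega>\<in>?SH. w \<omega>))"
  proof (rule sum_mono)
    fix L assume L: "L \<in> Ls"
    let ?G = "{\<omega> \<in> Pow E. ?P L \<omega>}"
    have fG: "finite ?G" using fP by simp
    have "(\<Sum>\<omega>\<in>Pow E. if ?P L \<omega> then w \<omega> else 0) = (\<Sum>\<omega>\<in>?G. w \<omega>)"
      by (rule sum.inter_filter[symmetric, OF fP])
    also have "\<dots> \<le> (\<Sum>\<omega>\<in>?G. K * w (\<omega> \<union> Fs L))"
    proof (rule sum_mono)
      fix \<omega> assume "\<omega> \<in> ?G"
      hence "\<omega> \<subseteq> E" "Fs L \<inter> \<omega> = {}" by auto
      thus "w \<omega> \<le> K * w (\<omega> \<union> Fs L)" by (rule winj[OF L])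
    qed
    also have "\<dots> = K * (\<Sum>\<omega>\<in>?G. w (\<omega> \<union> Fs L))" by (simp add: sum_distrib_left)
    also have "(\<Sum>\<omega>\<in>?G. w (\<omega> \<union> Fs L)) = (\<Sum>\<omega>'\<in>(\<lambda>\<omega>. \<omega> \<union> Fs L) ` ?G. w \<omega>')"
    proof -
      have "inj_on (\<lambda>\<omega>. \<omega> \<union> Fs L) ?G"
      proof (rule inj_onI)
        fix a b assume "a \<in> ?G" "b \<in> ?G" "a \<union> Fs L = b \<union> Fs L"
        thus "a = b" by blast
      qed
      thus ?thesis by (simp add: sum.reindex)
    qed
    also have "\<dots> \<le> (\<Sum>\<omega>'\<in>?SH. w \<omega>')"
    proof (rule sum_mono2[OF fSH])
      show "(\<lambda>\<omega>. \<omega> \<union> Fs L) ` ?G \<subseteq> ?SH" using FsE[OF L] by auto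
    qed (simp add: w0)
    hence "K * (\<Sum>\<omega>'\<in>(\<lambda>\<omega>. \<omega> \<union> Fs L) ` ?G. w \<omega>') \<le> K * (\<Sum>\<omega>'\<in>?SH. w \<omega>')"
      using K0 by (simp add: mult_left_mono)
    finally show "(\<Sum>\<omega>\<in>Pow E. if ?P L \<omega> then w \<omega> else 0) \<le> K * (\<Sum>\<omega>\<in>?SH. w \<omega>)" .
  qed
  also have "\<dots> = real (card Ls) * K * (\<Sum>\<omega>\<in>?SH. w \<omega>)" by simp
  finally show ?thesis .
qed

(* A Peierls argument: opening a chain L is injective on the configurations disjoint from L and
   costs at most a factor (q (1 - p) / p)^m in weight, and every configuration of the event can be
   mapped into the conditioning event by opening one of the chains. *)
lemma PhiTB_cond_le_by_chain_insertion:
  fixes Ls :: "'v set list set"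
  assumes p0: "0 < p" and p1: "p \<le> 1" and q1: "q \<ge> 1" and fE: "finite E" and fL: "finite Ls"
    and EV: "\<And>f. f \<in> E \<Longrightarrow> \<exists>a b. f = {a,b} \<and> a \<in> V \<and> b \<in> V"
    and Ls: "\<And>L. L \<in> Ls \<Longrightarrow> distinct L \<and> length L = m \<and> set L \<subseteq> E"
    and cover: "\<And>\<omega>. \<omega> \<subseteq> E \<Longrightarrow> A \<omega> \<Longrightarrow> H \<omega> \<Longrightarrow> \<exists>L\<in>Ls. set L \<inter> \<omega> = {} \<and> H (\<omega> \<union> set L)"
  shows "PhiTB_cond V E T B p q A H \<le> real (card Ls) * (q * (1 - p) / p) ^ m"
proof -
  let ?w = "rc_weight V E T B p q"
  let ?K = "(q * (1 - p) / p) ^ m"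
  let ?SAH = "\<Sum>\<omega>\<in>{\<omega>. \<omega> \<subseteq> E \<and> A \<omega> \<and> H \<omega>}. ?w \<omega>"
  let ?SH = "\<Sum>\<omega>\<in>{\<omega>. \<omega> \<subseteq> E \<and> H \<omega>}. ?w \<omega>"
  let ?Z = "\<Sum>\<omega>\<in>Pow E. ?w \<omega>"
  have w0: "?w \<omega> \<ge> 0" for \<omega> by (rule rc_weight_nonneg) (use p0 p1 q1 in auto)
  have K0: "?K \<ge> 0" using p0 p1 q1 by simp
  have "?SAH \<le> real (card Ls) * ?K * ?SH"
  proof (rule sum_le_by_cover[OF fE fL w0 K0 cover])
    fix L \<omega> assume L: "L \<in> Ls" and \<omega>: "\<omega> \<subseteq> E" "set L \<inter> \<omega> = {}"
    have LE: "set L \<subseteq> E" and "card (set L) = m" using Ls[OF L] distinct_card by auto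
    moreover have "\<forall>f\<in>set L. \<exists>a b. f = {a,b} \<and> a \<in> V \<and> b \<in> V" using LE EV by blast
    ultimately show "?w \<omega> \<le> ?K * ?w (\<omega> \<union> set L)"
      using rc_weight_le_open[OF p0 p1 q1 fE \<omega>(1) LE \<omega>(2)] by simp
  next
    show "set L \<subseteq> E" if "L \<in> Ls" for L using Ls[OF that] by simp
  qed
  moreover have "?SAH \<ge> 0" "?SH \<ge> 0" "?Z \<ge> 0" by (auto intro!: sum_nonneg simp: w0)
  ultimately have "(?SAH / ?Z) / (?SH / ?Z) \<le> real (card Ls) * ?K"
    using K0 by (cases "?Z = 0 \<or> ?SH = 0") (auto simp: divide_le_eq)
  thus ?thesis unfolding PhiTB_cond_def PhiTB_def by simp
qed

section \<open>Counting *-chains\<close>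

definition near_chains :: "nat \<Rightarrow> int list set set \<Rightarrow> nat \<Rightarrow> int list set list set" where
  "near_chains d E k = {L. length L = Suc k \<and> set L \<subseteq> E \<and> successively (near d) L}"

lemma near_chains_finite: "finite E \<Longrightarrow> finite (near_chains d E k)"
proof -
  assume "finite E"
  hence "finite {L. set L \<subseteq> E \<and> length L = Suc k}" by (rule finite_lists_length_eq)
  thus ?thesis unfolding near_chains_def by (rule finite_subset[rotated]) blast
qed

lemma card_near_chains:
  assumes fE: "finite E" and D: "\<And>f. f \<in> E \<Longrightarrow> card {g \<in> E. near d g f} \<le> D"
  shows "card (near_chains d E k) \<le> card E * D ^ k"
proof (induction k)
  case 0
  have "near_chains d E 0 = (\<lambda>f. [f]) ` E"
  proof
    show "near_chains d E 0 \<subseteq> (\<lambda>f. [f]) ` E"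
    proof
      fix L assume "L \<in> near_chains d E 0"
      hence "length L = 1" "set L \<subseteq> E" unfolding near_chains_def by auto
      then obtain f where "L = [f]" by (metis One_nat_def length_0_conv length_Suc_conv)
      thus "L \<in> (\<lambda>f. [f]) ` E" using \<open>set L \<subseteq> E\<close> by auto
    qed
    show "(\<lambda>f. [f]) ` E \<subseteq> near_chains d E 0" unfolding near_chains_def by auto
  qed
  hence "card (near_chains d E 0) \<le> card E" using card_image_le[OF fE] by simp
  thus ?case by simp
next
  case (Suc k)
  let ?U = "\<Union>L\<in>near_chains d E k. (\<lambda>g. g # L) ` {g \<in> E. near d g (hd L)}"
  have sub: "near_chains d E (Suc k) \<subseteq> ?U"
  proof
    fix L assume L: "L \<in> near_chains d E (Suc k)"
    then obtain g L' where gL: "L = g # L'" unfolding near_chains_def by (cases L) auto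
    have lL': "length L' = Suc k" using L gL unfolding near_chains_def by simp
    then obtain h L'' where L'': "L' = h # L''" by (cases L') auto
    have s: "successively (near d) (g # h # L'')" using L gL L'' unfolding near_chains_def by simp
    have "L' \<in> near_chains d E k" using L gL lL' s L'' unfolding near_chains_def by auto
    moreover have "g \<in> E" using L gL unfolding near_chains_def by auto
    moreover have "near d g (hd L')" using s L'' by simp
    ultimately show "L \<in> ?U" using gL by blast
  qed
  have fU: "\<forall>L\<in>near_chains d E k. finite ((\<lambda>g. g # L) ` {g \<in> E. near d g (hd L)})" using fE by simp
  have "card (near_chains d E (Suc k)) \<le> card ?U"
    by (rule card_mono[OF _ sub]) (use near_chains_finite[OF fE] fU in blast)
  also have "\<dots> \<le> (\<Sum>L\<in>near_chains d E k. card ((\<lambda>g. g # L) ` {g \<in> E. near d g (hd L)}))"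
    by (rule card_UN_le[OF near_chains_finite[OF fE]])
  also have "\<dots> \<le> (\<Sum>L\<in>near_chains d E k. D)"
  proof (rule sum_mono)
    fix L assume L: "L \<in> near_chains d E k"
    have "hd L \<in> E" using L unfolding near_chains_def by (cases L) auto
    have "card ((\<lambda>g. g # L) ` {g \<in> E. near d g (hd L)}) \<le> card {g \<in> E. near d g (hd L)}"
      using fE by (intro card_image_le) simp
    also have "\<dots> \<le> D" using D[OF \<open>hd L \<in> E\<close>] .
    finally show "card ((\<lambda>g. g # L) ` {g \<in> E. near d g (hd L)}) \<le> D" .
  qed
  also have "\<dots> = card (near_chains d E k) * D" by simp
  also have "\<dots> \<le> card E * D ^ k * D" using Suc.IH by (rule mult_right_mono) simp
  finally show ?case by (simp add: ac_simps)
qed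

definition unit_nbhd :: "nat \<Rightarrow> int list \<Rightarrow> int list set" where
  "unit_nbhd d a = {v. length v = d \<and> (\<forall>i<d. \<bar>v!i - a!i\<bar> \<le> 1)}"

lemma unit_nbhd_finite_card:
  "finite (unit_nbhd d a) \<and> card (unit_nbhd d a) \<le> 3 ^ d"
proof -
  let ?Z = "{zs. set zs \<subseteq> {-1,0,1::int} \<and> length zs = d}"
  let ?shift = "\<lambda>zs. map (\<lambda>i. a!i + zs!i) [0..<d]"
  have fZ: "finite ?Z" by (rule finite_lists_length_eq) simp
  have c3: "card {-1,0,1::int} = 3" by simp
  have "card ?Z = card {-1,0,1::int} ^ d" by (rule card_lists_length_eq) simp
  hence cZ: "card ?Z = 3 ^ d" by (simp only: c3)
  have "unit_nbhd d a \<subseteq> ?shift ` ?Z"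
  proof
    fix v assume v: "v \<in> unit_nbhd d a"
    define zs where "zs = map (\<lambda>i. v!i - a!i) [0..<d]"
    have "set zs \<subseteq> {-1,0,1}"
    proof
      fix z assume "z \<in> set zs"
      then obtain i where i: "i < d" "z = v!i - a!i" unfolding zs_def by auto
      have "\<bar>v!i - a!i\<bar> \<le> 1" using v i(1) unfolding unit_nbhd_def by blast
      thus "z \<in> {-1,0,1}" using i(2) by auto
    qed
    moreover have "length zs = d" unfolding zs_def by simp
    moreover have "v = ?shift zs"
      using v unfolding unit_nbhd_def zs_def by (intro nth_equalityI) auto
    ultimately show "v \<in> ?shift ` ?Z" by blast
  qed
  moreover have "card (?shift ` ?Z) \<le> 3 ^ d" using card_image_le[OF fZ] cZ by simp
  ultimately show ?thesis using fZ by (meson card_mono finite_imageI finite_subset le_trans)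
qed

lemma card_near_edges:
  assumes "lattice_edge d f"
  shows "card {g \<in> E. lattice_edge d g \<and> near d g f} \<le> 9 ^ d"
proof -
  obtain a0 b0 where ab: "f = {a0,b0}" "lattice_adj d a0 b0" using assms unfolding lattice_edge_def by blast
  let ?W = "unit_nbhd d a0"
  have fW: "finite ?W" and cW: "card ?W \<le> 3 ^ d" using unit_nbhd_finite_card by blast+
  have "{g \<in> E. lattice_edge d g \<and> near d g f} \<subseteq> (\<lambda>(u,v). {u,v}) ` (?W \<times> ?W)"
  proof
    fix g assume g: "g \<in> {g \<in> E. lattice_edge d g \<and> near d g f}"
    then obtain u v where uv: "g = {u,v}" "lattice_adj d u v" unfolding lattice_edge_def by blast
    have "u \<in> ?W" "v \<in> ?W" using g uv ab unfolding near_def unit_nbhd_def lattice_adj_iff by auto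
    thus "g \<in> (\<lambda>(u,v). {u,v}) ` (?W \<times> ?W)" using uv(1) by force
  qed
  hence "card {g \<in> E. lattice_edge d g \<and> near d g f} \<le> card ((\<lambda>(u,v). {u,v}) ` (?W \<times> ?W))"
    using fW by (intro card_mono) auto
  also have "\<dots> \<le> card (?W \<times> ?W)" using fW by (intro card_image_le) auto
  also have "\<dots> = card ?W * card ?W" by (simp add: card_cartesian_product)
  also have "\<dots> \<le> 3 ^ d * 3 ^ d" using cW by (intro mult_mono) auto
  also have "\<dots> = 9 ^ d" by (simp add: power_mult_distrib[symmetric])
  finally show ?thesis .
qed

lemma l1_le_cube: "v \<in> cube d x \<rho> \<Longrightarrow> l1 d x v \<le> int d * \<rho>"
proof -
  assume v: "v \<in> cube d x \<rho>"
  have "l1 d x v \<le> (\<Sum>i<d. \<rho>)" unfolding l1_def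
    by (rule sum_mono) (use v in \<open>auto simp: cube_iff abs_minus_commute\<close>)
  thus ?thesis by simp
qed

lemma box_E_lattice_edge: "f \<in> box_E d u r \<Longrightarrow> lattice_edge d f"
  unfolding box_E_def by blast

lemma box_E_subset: "f \<in> box_E d u r \<Longrightarrow> f \<subseteq> box_V d u r"
  unfolding box_E_def by blast

(* The cube of radius \<rho> around the endpoint x of e consists of points at l1-distance less than R
   from e, so it contains no vertex of an edge leaving the box (in particular no vertex of T or B)
   and no endpoint of a pivotal edge other than e. *)
lemma box_isolated_cut_edge:
  fixes d :: nat and u :: "nat \<Rightarrow> nat \<Rightarrow> real" and r :: real
  defines "E \<equiv> box_E d u r"
  assumes d2: "d \<ge> 2" and TB: "T \<subseteq> box_bd d u r" "B \<subseteq> box_bd d u r"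
    and \<omega>E: "\<omega> \<subseteq> E" and H: "\<not> connects \<omega> T B" and C: "C \<in> cuts_of E T B \<omega>" and eC: "e \<in> C"
    and exy: "e = {x,y}" and xS: "x \<in> reach (E - C) T" and yS: "y \<in> reach (E - C) B"
    and dist: "edge_set_dist d e ((pivotal E T B \<omega> \<union> box_Ec d u r) - {e}) \<ge> R"
    and \<rho>R: "real d * real_of_int \<rho> < R" and \<rho>1: "\<rho> \<ge> 1"
  shows "isolated_cut_edge d E T B \<omega> C x y x \<rho>"
proof -
  let ?V = "box_V d u r" and ?Far = "pivotal E T B \<omega> \<union> box_Ec d u r"
  have cut: "is_cut E C T B" and C\<omega>: "C \<inter> \<omega> = {}" using C unfolding cuts_of_def by auto
  have CE: "C \<subseteq> E" and sepC: "\<not> connects (E - C) T B" using cut unfolding is_cut_def separates_def by auto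
  have eE: "e \<in> E" using eC CE by blast
  have E_lattice: "\<And>f. f \<in> E \<Longrightarrow> lattice_edge d f" unfolding E_def by (rule box_E_lattice_edge)
  have "x \<noteq> y" using xS yS reach_disjoint[OF sepC] by blast
  moreover obtain a b where "e = {a,b}" "lattice_adj d a b"
    using E_lattice[OF eE] unfolding lattice_edge_def by blast
  ultimately have xy: "lattice_adj d x y" using exy lattice_adj_sym by (auto simp: doubleton_eq_iff)
  have lx: "length x = d" using xy unfolding lattice_adj_iff by simp
  have xV: "x \<in> ?V" using box_E_subset eE exy unfolding E_def by blast
  let ?Q = "cube d x \<rho>"
  have far: "R \<le> real_of_int (l1 d x b)" if "f \<in> ?Far" "f \<noteq> e" "b \<in> f" for f b
  proof -
    let ?S = "{real_of_int (l1 d a b) | a b f. f \<in> ?Far - {e} \<and> a \<in> e \<and> b \<in> f}"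
    have "real_of_int (l1 d x b) \<in> ?S" using that exy by blast
    moreover have "bdd_below ?S" by (rule bdd_belowI[of _ 0]) (auto simp: l1_nonneg)
    ultimately have "edge_set_dist d e (?Far - {e}) \<le> real_of_int (l1 d x b)"
      unfolding edge_set_dist_def by (rule cInf_lower)
    thus ?thesis using dist by simp
  qed
  have near: "real_of_int (l1 d x v) < R" if "v \<in> ?Q" for v
  proof -
    have "real_of_int (l1 d x v) \<le> real d * real_of_int \<rho>"
      using l1_le_cube[OF that] by (metis of_int_le_iff of_int_mult of_int_of_nat_eq)
    thus ?thesis using \<rho>R by simp
  qed
  have outside_far: "a \<notin> ?Q" if "a \<in> ?V" "w \<notin> ?V" "lattice_adj d a w" for a w
  proof -
    have "{a,w} \<in> box_Ec d u r" "{a,w} \<noteq> e"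
      using that eE box_E_subset unfolding box_Ec_def lattice_edge_def E_def by blast+
    thus ?thesis using far[of "{a,w}" a] near by force
  qed
  have xQ: "x \<in> ?Q" unfolding cube_iff using lx \<rho>1 by simp
  have QV: "?Q \<subseteq> ?V"
  proof
    fix v assume vQ: "v \<in> ?Q"
    show "v \<in> ?V"
    proof (rule ccontr)
      assume "v \<notin> ?V"
      then obtain a w where aw: "a \<in> ?V" "w \<notin> ?V" "(a,w) \<in> lattice_rel d \<inter> ?Q \<times> ?Q"
        using rtrancl_first_exit[OF cube_connected[OF xQ vQ] xV] by blast
      thus False using outside_far[OF aw(1,2)] unfolding lattice_rel_def by blast
    qed
  qed
  show ?thesis
  proof
    show "{a,b} \<in> E" if "a \<in> ?Q" "b \<in> ?Q" "lattice_adj d a b" for a b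
      using that QV unfolding E_def box_E_def lattice_edge_def by blast
    show "T \<inter> ?Q = {}" "B \<inter> ?Q = {}"
      using TB outside_far unfolding box_bd_def by blast+
    show "a \<notin> ?Q" if "f \<in> pivotal E T B \<omega>" "f \<noteq> {x,y}" "a \<in> f" for f a
      using far[of f a] that near exy by force
    show "x \<in> cube d x 1" "y \<in> cube d x 1"
      using lx xy lattice_adj_coord_le[OF xy] unfolding cube_iff lattice_adj_iff
      by (auto simp: abs_minus_commute)
  qed (use d2 E_lattice \<omega>E CE C\<omega> H sepC eC exy xS yS lx \<rho>1 in auto)
qed

lemma box_far_cut_edge_chain:
  fixes d :: nat and u :: "nat \<Rightarrow> nat \<Rightarrow> real" and r :: real
  defines "E \<equiv> box_E d u r"
  assumes d2: "d \<ge> 2" and TB: "T \<subseteq> box_bd d u r" "B \<subseteq> box_bd d u r"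
    and \<omega>E: "\<omega> \<subseteq> E" and H: "\<not> connects \<omega> T B" and C: "C \<in> cuts_of E T B \<omega>" and eC: "e \<in> C"
    and dist: "edge_set_dist d e ((pivotal E T B \<omega> \<union> box_Ec d u r) - {e}) \<ge> R"
    and \<rho>R: "real d * real_of_int \<rho> < R" and r1: "1 \<le> \<rho>'" and r2: "2 * \<rho>' \<le> \<rho>"
    and m: "int m \<le> \<rho>' - 1"
  shows "\<exists>L. closed_chain d E T B \<omega> m L"
proof -
  have "is_cut E C T B" using C unfolding cuts_of_def by auto
  then obtain x y where xy: "e = {x,y}" "x \<in> reach (E - C) T" "y \<in> reach (E - C) B"
    using cut_edge_endpoints eC by blast
  have "\<rho> \<ge> 1" using r1 r2 by simp
  then interpret isolated_cut_edge d E T B \<omega> C x y x \<rho>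
    using box_isolated_cut_edge[OF d2 TB \<omega>E[unfolded E_def] H C[unfolded E_def] eC
        xy[unfolded E_def] dist[unfolded E_def] \<rho>R] unfolding E_def by blast
  show ?thesis by (rule closed_chain_exists[OF r1 r2 m])
qed

lemma radius_choice:
  fixes R :: real
  assumes "d > 0" "R / real d \<ge> 18"
  obtains \<rho> \<rho>' :: int and m :: nat where "real d * real_of_int \<rho> < R" "1 \<le> \<rho>'" "2 * \<rho>' \<le> \<rho>"
    "int m \<le> \<rho>' - 1" "1 \<le> m" "real m \<ge> R / (2 * real d) - 2"
proof
  define \<rho> :: int where "\<rho> = \<lceil>R / real d\<rceil> - 1"
  have lo: "real_of_int \<rho> \<ge> R / real d - 1" and hi: "real_of_int \<rho> < R / real d"
    unfolding \<rho>_def by linarith+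
  show "real d * real_of_int \<rho> < R" using hi assms(1) by (simp add: field_simps)
  have "\<rho> \<ge> 17" using lo assms(2) by linarith
  thus "1 \<le> \<rho> div 2" "2 * (\<rho> div 2) \<le> \<rho>" "int (nat (\<rho> div 2 - 1)) \<le> \<rho> div 2 - 1"
    "1 \<le> nat (\<rho> div 2 - 1)" by simp_all
  have "2 * real_of_int (\<rho> div 2) \<ge> real_of_int \<rho> - 1" by linarith
  moreover have "R / (2 * real d) = (R / real d) / 2" by simp
  ultimately show "real (nat (\<rho> div 2 - 1)) \<ge> R / (2 * real d) - 2"
    using lo \<open>\<rho> \<ge> 17\<close> by simp
qed

lemma ln_ge_12:
  fixes n :: real
  assumes "d \<ge> 2" "n > 3 ^ (6 * d)"
  shows "ln n \<ge> 12"
proof -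
  have "exp (12::real) = exp 1 ^ 12" by (metis exp_of_nat_mult mult.right_neutral of_nat_numeral)
  also have "\<dots> \<le> 3 ^ 12" using exp_le by (intro power_mono) auto
  also have "(3::real) ^ 12 \<le> 3 ^ (6 * d)" using assms(1) by (intro power_increasing) auto
  finally have "exp 12 \<le> n" using assms(2) by simp
  moreover have "n > 0" using assms(2) zero_less_power[of "3::real" "6 * d"] by linarith
  ultimately show ?thesis by (simp add: ln_ge_iff)
qed

lemma chain_count_le_powr:
  fixes n c D \<rho>f :: real and m :: nat
  assumes n1: "n \<ge> 1" and ln3: "ln n \<ge> 3" and c1: "c \<ge> 1" and Dr: "D * \<rho>f \<le> 1/5" and r0: "\<rho>f \<ge> 0"
    and D1: "D \<ge> 1" and m: "real m \<ge> 3 * c * ln n - 2"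
  shows "n * D^m * \<rho>f^m \<le> 1 / n powr c"
proof -
  have n0: "n > 0" using n1 by simp
  have "n * D^m * \<rho>f^m = n * (D * \<rho>f)^m" by (simp add: power_mult_distrib)
  also have "\<dots> \<le> n * (1/5)^m"
    using Dr r0 D1 n0 by (intro mult_left_mono power_mono) auto
  also have "\<dots> = n / 5^m" by (simp add: power_divide)
  finally have s1: "n * D^m * \<rho>f^m \<le> n / 5^m" .
  have cl: "c * ln n \<ge> ln n" using c1 ln3 by (simp add: mult_right_mono)
  have mb: "real m \<ge> (1 + c) * ln n"
  proof -
    have e: "3 * c * ln n = 3 * (c * ln n)" "(1 + c) * ln n = ln n + c * ln n" by (simp_all add: algebra_simps)
    show ?thesis using m cl ln3 unfolding e by linarith
  qed
  have l5: "ln (5::real) \<ge> 1"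
  proof -
    have "exp 1 \<le> (5::real)" using exp_le by simp
    thus ?thesis using ln_ge_iff[of 5 1] by simp
  qed
  have "(1 + c) * ln n \<le> real m * ln 5"
  proof -
    have "real m \<le> real m * ln 5" using l5 by (simp add: mult_le_cancel_left1)
    thus ?thesis using mb by linarith
  qed
  hence "exp ((1 + c) * ln n) \<le> exp (real m * ln 5)" by simp
  moreover have "exp ((1 + c) * ln n) = n powr (1 + c)" using n0 by (simp add: powr_def)
  moreover have "exp (real m * ln 5) = (5::real) ^ m"
    by (metis exp_ln_iff exp_of_nat_mult zero_less_numeral)
  ultimately have "n powr (1 + c) \<le> 5 ^ m" by simp
  moreover have "n powr (1 + c) = n * n powr c" using n0 by (simp add: powr_add)
  ultimately have b: "n * n powr c \<le> 5 ^ m" by simp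
  have pc: "n powr c > 0" using n0 by simp
  have "n / 5^m \<le> n / (n * n powr c)"
    using b n0 pc by (intro divide_left_mono) auto
  also have "\<dots> = 1 / n powr c" using n0 by simp
  finally show ?thesis using s1 by simp
qed




lemma weight_factor_bound:
  fixes p q :: real
  assumes q1: "q \<ge> 1" and p: "1 - 1 / (6 * q * 9 ^ d) \<le> p" "p \<le> 1"
  shows "p \<ge> 5 / 6" "9 ^ d * (q * (1 - p) / p) \<le> 1 / 5"
proof -
  define D :: real where "D = 9 ^ d"
  define K where "K = q * (1 - p) / p"
  have D1: "D \<ge> 1" unfolding D_def by simp
  have qD: "q * D \<ge> 1" using q1 D1 mult_mono[of 1 q 1 D] by simp
  have "1 / (6 * q * D) \<le> 1 / 6" using qD by (simp add: field_simps)
  thus p56: "p \<ge> 5 / 6" using p(1) unfolding D_def by simp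
  have "1 - p \<le> 1 / (6 * q * D)" using p(1) unfolding D_def by simp
  hence "q * D * (1 - p) \<le> 1 / 6" using qD q1 D1 by (simp add: field_simps)
  moreover have "D * K = q * D * (1 - p) / p" unfolding K_def by simp
  ultimately have "D * K \<le> (1 / 6) / p"
    using divide_right_mono[of "q * D * (1 - p)" "1 / 6" p] p56 by simp
  also have "\<dots> \<le> (1 / 6) / (5 / 6)" using p56 by (intro divide_left_mono) auto
  finally have "D * K \<le> 1 / 5" by simp
  thus "9 ^ d * (q * (1 - p) / p) \<le> 1 / 5" unfolding D_def K_def .
qed

lemma card_distinct_near_chains_box:
  assumes "finite (box_E d u r)"
  shows "card {L \<in> near_chains d (box_E d u r) k. distinct L} \<le> card (box_E d u r) * (9 ^ d) ^ k"
proof -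
  let ?E = "box_E d u r"
  have "card {L \<in> near_chains d ?E k. distinct L} \<le> card (near_chains d ?E k)"
    using near_chains_finite[OF assms] by (intro card_mono) auto
  also have "\<dots> \<le> card ?E * (9 ^ d) ^ k"
  proof (rule card_near_chains[OF assms])
    fix f assume "f \<in> ?E"
    hence "lattice_edge d f" "{g \<in> ?E. near d g f} = {g \<in> ?E. lattice_edge d g \<and> near d g f}"
      using box_E_lattice_edge by blast+
    thus "card {g \<in> ?E. near d g f} \<le> 9 ^ d" using card_near_edges by simp
  qed
  finally show ?thesis .
qed

lemma PhiTB_cond_far_cut_edge_le:
  fixes d j :: nat and u :: "nat \<Rightarrow> nat \<Rightarrow> real" and r p q c :: real
  defines "E \<equiv> box_E d u r" and "T \<equiv> box_T d u r j" and "B \<equiv> box_B d u r j"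
    and "n \<equiv> real (card (box_E d u r))"
  assumes d2: "d \<ge> 2" and q1: "q \<ge> 1" and c1: "c \<ge> 1"
    and p: "1 - 1 / (6 * q * 9 ^ d) \<le> p" "p \<le> 1" and big: "n > 3 ^ (6 * d)"
  shows "PhiTB_cond (box_V d u r) E T B p q
           (\<lambda>\<omega>. \<exists>C \<in> cuts_of E T B \<omega>. \<exists>e \<in> C.
                  edge_set_dist d e ((pivotal E T B \<omega> \<union> box_Ec d u r) - {e}) \<ge> 6 * real d * c * ln n)
           (\<lambda>\<omega>. \<not> connects \<omega> T B)
         \<le> 1 / n powr c"
  (is "PhiTB_cond _ E T B p q ?A ?H \<le> _")
proof -
  define D :: real where "D = 9 ^ d"
  define K where "K = q * (1 - p) / p"
  define R where "R = 6 * real d * c * ln n"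
  have D1: "D \<ge> 1" unfolding D_def by simp
  have p56: "p \<ge> 5 / 6" and DK: "D * K \<le> 1 / 5"
    using weight_factor_bound[OF q1 p] unfolding D_def K_def by auto
  have K0: "K \<ge> 0" unfolding K_def using p p56 q1 by simp
  have n1: "n \<ge> 1" using big one_le_power[of "3::real" "6 * d"] by linarith
  have fE: "finite E" using n1 unfolding n_def E_def by (metis card.infinite of_nat_0 zero_less_one not_le)
  have ln3: "ln n \<ge> 3" using ln_ge_12[OF d2 big] by simp
  have "R / real d \<ge> 18"
    using d2 c1 mult_mono[OF c1 ln3] unfolding R_def by (simp add: field_simps)
  then obtain \<rho> \<rho>' :: int and m :: nat where \<rho>: "real d * real_of_int \<rho> < R" "1 \<le> \<rho>'" "2 * \<rho>' \<le> \<rho>"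
      "int m \<le> \<rho>' - 1" "1 \<le> m" "real m \<ge> R / (2 * real d) - 2"
    using radius_choice[of d R] d2 by auto
  have m3: "real m \<ge> 3 * c * ln n - 2" using \<rho>(6) d2 unfolding R_def by (simp add: field_simps)
  define Ls where "Ls = {L \<in> near_chains d E (m - 1). distinct L}"
  have "PhiTB_cond (box_V d u r) E T B p q ?A ?H \<le> real (card Ls) * K ^ m"
    unfolding K_def
  proof (rule PhiTB_cond_le_by_chain_insertion)
    show "0 < p" "p \<le> 1" "1 \<le> q" "finite E" using p p56 q1 fE by auto
    show "finite Ls" unfolding Ls_def using near_chains_finite[OF fE] by simp
    show "\<exists>a b. f = {a,b} \<and> a \<in> box_V d u r \<and> b \<in> box_V d u r" if "f \<in> E" for f
      using that box_E_subset[of f d u r] unfolding E_def box_E_def lattice_edge_def by blast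
    show "distinct L \<and> length L = m \<and> set L \<subseteq> E" if "L \<in> Ls" for L
      using that \<rho>(5) unfolding Ls_def near_chains_def by auto
    show "\<exists>L\<in>Ls. set L \<inter> \<omega> = {} \<and> ?H (\<omega> \<union> set L)" if w: "\<omega> \<subseteq> E" "?A \<omega>" "?H \<omega>" for \<omega>
    proof -
      obtain C e where "C \<in> cuts_of E T B \<omega>" "e \<in> C"
          "edge_set_dist d e ((pivotal E T B \<omega> \<union> box_Ec d u r) - {e}) \<ge> R"
        using w(2) unfolding R_def by blast
      then obtain L where "closed_chain d E T B \<omega> m L"
        using box_far_cut_edge_chain[OF d2 _ _ w(1)[unfolded E_def] w(3)[unfolded E_def]] \<rho>(1-4)
        unfolding T_def B_def E_def box_T_def box_B_def by blast
      moreover have "L \<in> Ls" using calculation \<rho>(5) unfolding Ls_def near_chains_def closed_chain_def by auto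
      ultimately show ?thesis unfolding closed_chain_def by blast
    qed
  qed
  also have "\<dots> \<le> n * D ^ m * K ^ m"
  proof -
    have "real (card Ls) \<le> real (card (box_E d u r) * (9 ^ d) ^ (m - 1))"
      using card_distinct_near_chains_box[OF fE[unfolded E_def], of "m - 1"]
      unfolding Ls_def E_def by (simp only: of_nat_le_iff)
    hence "real (card Ls) \<le> n * D ^ (m - 1)" unfolding n_def D_def by simp
    also have "\<dots> \<le> n * D ^ m" using D1 n1 by (intro mult_left_mono power_increasing) auto
    finally show ?thesis using K0 by (simp add: mult_right_mono)
  qed
  also have "\<dots> \<le> 1 / n powr c" by (rule chain_count_le_powr[OF n1 ln3 c1 DK K0 D1 m3])
  finally show ?thesis .
qed

theorem proposition3p1:
  fixes d :: nat and q :: real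
  assumes "d \<ge> 2" and "q \<ge> 1"
  shows "\<exists>pt::real. pt < 1 \<and> (\<exists>\<kappa>::real. \<kappa> > 1 \<and>
    (\<forall>p c u r j. pt \<le> p \<and> p \<le> 1 \<and> c \<ge> (1::real) \<and> orthonormal_frame d u \<and> j < d
       \<and> real (card (box_E d u r)) > 3 ^ (6 * d) \<longrightarrow>
       (let V = box_V d u r; E = box_E d u r; T = box_T d u r j; B = box_B d u r j;
            n = real (card E) in
        PhiTB_cond V E T B p q
          (\<lambda>\<omega>. \<exists>C \<in> cuts_of E T B \<omega>. \<exists>e \<in> C.
                 edge_set_dist d e ((pivotal E T B \<omega> \<union> box_Ec d u r) - {e})
                   \<ge> \<kappa> * c * ln n)
          (\<lambda>\<omega>. \<not> connects \<omega> T B)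
        \<le> 1 / n powr c)))"
proof -
  have "0 < 6 * q * 9 ^ d" using assms(2) by simp
  hence "1 - 1 / (6 * q * 9 ^ d) < 1" by simp
  moreover have "6 * real d > 1" using assms(1) by simp
  ultimately show ?thesis
    unfolding Let_def using PhiTB_cond_far_cut_edge_le[OF assms(1,2)] by blast
qed

end
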